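(* Let $k$ be a field, $B$ a unital associative $k$-algebra and $(J_i)_{i\in I}$ a covering of $B$, i.e.\ a finite family of two-sided ideals with $\bigcap_{i\in I}J_i=\{0\}$. Let $B_i=B/J_i$, $B_{ij}=B/(J_i+J_j)$, $\pi_i:B\to B_i$, $\pi_{ij}:B\to B_{ij}$, $\pi^i_j:B_i\to B_{ij}$ the canonical surjections, $A=\bigoplus_{i\in I}B_i$, and let $\mathcal{C}=\bigoplus_{i,j\in I}B_{ij}$ be the $A$-coring with bimodule structure $(a_i)_i\cdot(a_{jk})_{j,k}\cdot(a'_l)_l=(\pi^j_k(a_j)a_{jk}\pi^k_j(a'_k))_{j,k}$, coproduct $\Delta_{\mathcal{C}}((\pi_{ij}(b_{ij}))_{i,j})=\sum_{k\in I}(\pi_{il}(b_{ik}))_{i,l}\otimes_A(\pi_{mj}(\delta_{kj}1_B))_{m,j}$ and counit $\varepsilon_{\mathcal{C}}((\pi_{ij}(b_{ij}))_{i,j})=(\pi_i(b_{ii}))_i$. Set $g=(\pi_{ij}(1_B))_{i,j\in I}\in\mathcal{C}$. Then: (1) If $(J_i)_{i\in I}$ is a complete covering of $B$, then $(\mathcal{C},g)$ is a Galois coring. (2) If $A$ is a faithfully flat left or right $B$-module, then $(J_i)_{i\in I}$ is a complete covering of $B$.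
   Context: $\delta_{kj}1_B$ is $1_B$ if $k=j$ and $0$ otherwise. $A$ is a $B$-bimodule via the algebra map $\iota:B\to A$, $b\mapsto(\pi_i(b))_{i\in I}$. The covering completion of $B$ is $B_c=\{(a_i)_{i\in I}\in A:\ \pi^i_j(a_i)=\pi^j_i(a_j)\text{ for all }i,j\}$; the covering is complete if $\kappa:B\to B_c$, $b\mapsto(\pi_i(b))_{i\in I}$, is surjective. For an $A$-coring $\mathcal{C}$ (an $A$-bimodule with coassociative counital $A$-bimodule maps $\Delta_{\mathcal{C}}:\mathcal{C}\to\mathcal{C}\otimes_A\mathcal{C}$, $\varepsilon_{\mathcal{C}}:\mathcal{C}\to A$), an element $g$ is grouplike if $\Delta_{\mathcal{C}}(g)=g\otimes_A g$ and $\varepsilon_{\mathcal{C}}(g)=1_A$; its coinvariants are $A^{co\mathcal{C}}_g=\{b\in A: b\cdot g=g\cdot b\}$, a subalgebra of $A$. $(\mathcal{C},g)$ with $g$ grouplike is a Galois coring if, with $B'=A^{co\mathcal{C}}_g$, the map $A\otimes_{B'}A\to\mathcal{C}$, $a\otimes_{B'}a'\mapsto a\cdot g\cdot a'$, is an isomorphism. *)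

theory Defs
  imports "HOL-Algebra.Algebra"
begin

definition k_algebra :: "('k,'e) ring_scheme \<Rightarrow> ('b,'c) ring_scheme \<Rightarrow> ('k \<Rightarrow> 'b) \<Rightarrow> bool" where
  "k_algebra K B phi \<longleftrightarrow> field K \<and> ring B \<and> phi \<in> ring_hom K B \<and>
     (\<forall>x\<in>carrier K. \<forall>b\<in>carrier B. phi x \<otimes>\<^bsub>B\<^esub> b = b \<otimes>\<^bsub>B\<^esub> phi x)"

definition fs_single :: "'a \<Rightarrow> 'a \<Rightarrow> int" where
  "fs_single p = (\<lambda>q. if q = p then 1 else 0)"

text \<open>finitely supported integer-valued functions supported in S (free abelian group on S)\<close>
definition fsums :: "'a set \<Rightarrow> ('a \<Rightarrow> int) set" where
  "fsums S = {h. finite {p. h p \<noteq> 0} \<and> {p. h p \<noteq> 0} \<subseteq> S}"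

definition fs_map :: "('a \<Rightarrow> 'b) \<Rightarrow> ('a \<Rightarrow> int) \<Rightarrow> ('b \<Rightarrow> int)" where
  "fs_map g h = (\<lambda>q. \<Sum>p\<in>{p. h p \<noteq> 0 \<and> g p = q}. h p)"

text \<open>For a right R-module M (addition addM, action actM) and a left R-module N
(addition addN, action actN), the subgroup of the free abelian group on M x N generated by
the bilinearity and balancing relations.  The tensor product M (x)_R N is the quotient of
the free abelian group fsums (M x N) by this subgroup: two formal sums represent the same
element of M (x)_R N iff their difference lies in tens_rel.\<close>
inductive_set tens_rel :: "'r set \<Rightarrow> 'm set \<Rightarrow> ('m \<Rightarrow> 'm \<Rightarrow> 'm) \<Rightarrow> ('m \<Rightarrow> 'r \<Rightarrow> 'm)
    \<Rightarrow> 'n set \<Rightarrow> ('n \<Rightarrow> 'n \<Rightarrow> 'n) \<Rightarrow> ('r \<Rightarrow> 'n \<Rightarrow> 'n) \<Rightarrow> ('m \<times> 'n \<Rightarrow> int) set"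
  for R M addM actM N addN actN
where
  zero: "(\<lambda>_. 0) \<in> tens_rel R M addM actM N addN actN"
| add: "f \<in> tens_rel R M addM actM N addN actN \<Longrightarrow> h \<in> tens_rel R M addM actM N addN actN
        \<Longrightarrow> (\<lambda>p. f p + h p) \<in> tens_rel R M addM actM N addN actN"
| neg: "f \<in> tens_rel R M addM actM N addN actN \<Longrightarrow> (\<lambda>p. - f p) \<in> tens_rel R M addM actM N addN actN"
| addl: "m \<in> M \<Longrightarrow> m' \<in> M \<Longrightarrow> n \<in> N \<Longrightarrow>
        (\<lambda>p. fs_single (addM m m', n) p - fs_single (m, n) p - fs_single (m', n) p)
          \<in> tens_rel R M addM actM N addN actN"
| addr: "m \<in> M \<Longrightarrow> n \<in> N \<Longrightarrow> n' \<in> N \<Longrightarrow>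
        (\<lambda>p. fs_single (m, addN n n') p - fs_single (m, n) p - fs_single (m, n') p)
          \<in> tens_rel R M addM actM N addN actN"
| bal: "m \<in> M \<Longrightarrow> r \<in> R \<Longrightarrow> n \<in> N \<Longrightarrow>
        (\<lambda>p. fs_single (actM m r, n) p - fs_single (m, actN r n) p)
          \<in> tens_rel R M addM actM N addN actN"

definition lmod :: "('b,'c) ring_scheme \<Rightarrow> 'z set \<Rightarrow> ('z \<Rightarrow> 'z \<Rightarrow> 'z) \<Rightarrow> 'z \<Rightarrow> ('b \<Rightarrow> 'z \<Rightarrow> 'z) \<Rightarrow> bool" where
  "lmod B N addN zN act \<longleftrightarrow> comm_group \<lparr>carrier = N, monoid.mult = addN, one = zN\<rparr> \<and>
     (\<forall>b\<in>carrier B. \<forall>n\<in>N. act b n \<in> N) \<and>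
     (\<forall>b\<in>carrier B. \<forall>n\<in>N. \<forall>n'\<in>N. act b (addN n n') = addN (act b n) (act b n')) \<and>
     (\<forall>b\<in>carrier B. \<forall>b'\<in>carrier B. \<forall>n\<in>N. act (b \<oplus>\<^bsub>B\<^esub> b') n = addN (act b n) (act b' n)) \<and>
     (\<forall>b\<in>carrier B. \<forall>b'\<in>carrier B. \<forall>n\<in>N. act (b \<otimes>\<^bsub>B\<^esub> b') n = act b (act b' n)) \<and>
     (\<forall>n\<in>N. act \<one>\<^bsub>B\<^esub> n = n)"

definition rmod :: "('b,'c) ring_scheme \<Rightarrow> 'z set \<Rightarrow> ('z \<Rightarrow> 'z \<Rightarrow> 'z) \<Rightarrow> 'z \<Rightarrow> ('z \<Rightarrow> 'b \<Rightarrow> 'z) \<Rightarrow> bool" where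
  "rmod B N addN zN act \<longleftrightarrow> comm_group \<lparr>carrier = N, monoid.mult = addN, one = zN\<rparr> \<and>
     (\<forall>b\<in>carrier B. \<forall>n\<in>N. act n b \<in> N) \<and>
     (\<forall>b\<in>carrier B. \<forall>n\<in>N. \<forall>n'\<in>N. act (addN n n') b = addN (act n b) (act n' b)) \<and>
     (\<forall>b\<in>carrier B. \<forall>b'\<in>carrier B. \<forall>n\<in>N. act n (b \<oplus>\<^bsub>B\<^esub> b') = addN (act n b) (act n b')) \<and>
     (\<forall>b\<in>carrier B. \<forall>b'\<in>carrier B. \<forall>n\<in>N. act n (b \<otimes>\<^bsub>B\<^esub> b') = act (act n b) b') \<and>
     (\<forall>n\<in>N. act n \<one>\<^bsub>B\<^esub> = n)"

definition lmod_hom :: "('b,'c) ring_scheme \<Rightarrow> 'z set \<Rightarrow> ('z \<Rightarrow> 'z \<Rightarrow> 'z) \<Rightarrow> ('b \<Rightarrow> 'z \<Rightarrow> 'z)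
    \<Rightarrow> 'y set \<Rightarrow> ('y \<Rightarrow> 'y \<Rightarrow> 'y) \<Rightarrow> ('b \<Rightarrow> 'y \<Rightarrow> 'y) \<Rightarrow> ('z \<Rightarrow> 'y) \<Rightarrow> bool" where
  "lmod_hom B N addN act N2 addN2 act2 f \<longleftrightarrow> (\<forall>n\<in>N. f n \<in> N2) \<and>
     (\<forall>n\<in>N. \<forall>n'\<in>N. f (addN n n') = addN2 (f n) (f n')) \<and>
     (\<forall>b\<in>carrier B. \<forall>n\<in>N. f (act b n) = act2 b (f n))"

definition rmod_hom :: "('b,'c) ring_scheme \<Rightarrow> 'z set \<Rightarrow> ('z \<Rightarrow> 'z \<Rightarrow> 'z) \<Rightarrow> ('z \<Rightarrow> 'b \<Rightarrow> 'z)
    \<Rightarrow> 'y set \<Rightarrow> ('y \<Rightarrow> 'y \<Rightarrow> 'y) \<Rightarrow> ('y \<Rightarrow> 'b \<Rightarrow> 'y) \<Rightarrow> ('z \<Rightarrow> 'y) \<Rightarrow> bool" where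
  "rmod_hom B N addN act N2 addN2 act2 f \<longleftrightarrow> (\<forall>n\<in>N. f n \<in> N2) \<and>
     (\<forall>n\<in>N. \<forall>n'\<in>N. f (addN n n') = addN2 (f n) (f n')) \<and>
     (\<forall>b\<in>carrier B. \<forall>n\<in>N. f (act n b) = act2 (f n) b)"

text \<open>The ring A, viewed as a right B-module via the ring map iota (a . b = a iota(b)), is
faithfully flat: the functor A (x)_B - on left B-modules preserves injectivity (flat) and
A (x)_B N = 0 implies N = 0 (faithful).  Modules range over modules whose carrier lives in
the type 'z.\<close>
definition ff_right :: "('b,'c) ring_scheme \<Rightarrow> ('a,'d) ring_scheme \<Rightarrow> ('b \<Rightarrow> 'a) \<Rightarrow> 'z itself \<Rightarrow> bool" where
  "ff_right B A iota (U :: 'z itself) \<longleftrightarrow>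
     (\<forall>(N :: 'z set) addN zN act (N' :: 'z set) addN' zN' act' f.
        lmod B N addN zN act \<and> lmod B N' addN' zN' act' \<and>
        lmod_hom B N' addN' act' N addN act f \<and> inj_on f N' \<longrightarrow>
        (\<forall>h\<in>fsums (carrier A \<times> N').
           fs_map (\<lambda>(a, n). (a, f n)) h
             \<in> tens_rel (carrier B) (carrier A) (add A) (\<lambda>a b. a \<otimes>\<^bsub>A\<^esub> iota b) N addN act
           \<longrightarrow> h \<in> tens_rel (carrier B) (carrier A) (add A) (\<lambda>a b. a \<otimes>\<^bsub>A\<^esub> iota b) N' addN' act'))
   \<and> (\<forall>(N :: 'z set) addN zN act.
        lmod B N addN zN act \<and>
        fsums (carrier A \<times> N)
          \<subseteq> tens_rel (carrier B) (carrier A) (add A) (\<lambda>a b. a \<otimes>\<^bsub>A\<^esub> iota b) N addN act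
        \<longrightarrow> N = {zN})"

definition ff_left :: "('b,'c) ring_scheme \<Rightarrow> ('a,'d) ring_scheme \<Rightarrow> ('b \<Rightarrow> 'a) \<Rightarrow> 'z itself \<Rightarrow> bool" where
  "ff_left B A iota (U :: 'z itself) \<longleftrightarrow>
     (\<forall>(N :: 'z set) addN zN act (N' :: 'z set) addN' zN' act' f.
        rmod B N addN zN act \<and> rmod B N' addN' zN' act' \<and>
        rmod_hom B N' addN' act' N addN act f \<and> inj_on f N' \<longrightarrow>
        (\<forall>h\<in>fsums (N' \<times> carrier A).
           fs_map (\<lambda>(n, a). (f n, a)) h
             \<in> tens_rel (carrier B) N addN act (carrier A) (add A) (\<lambda>b a. iota b \<otimes>\<^bsub>A\<^esub> a)
           \<longrightarrow> h \<in> tens_rel (carrier B) N' addN' act' (carrier A) (add A) (\<lambda>b a. iota b \<otimes>\<^bsub>A\<^esub> a)))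
   \<and> (\<forall>(N :: 'z set) addN zN act.
        rmod B N addN zN act \<and>
        fsums (N \<times> carrier A)
          \<subseteq> tens_rel (carrier B) N addN act (carrier A) (add A) (\<lambda>b a. iota b \<otimes>\<^bsub>A\<^esub> a)
        \<longrightarrow> N = {zN})"

text \<open>C is an A-bimodule with additive structure given by the ring record C (only its
additive part is used), left action lact, right action ract; Delta maps C to formal sums
representing elements of C (x)_A C; eps : C -> A.\<close>
definition grouplike ::
  "('a,'d) ring_scheme \<Rightarrow> ('x,'e) ring_scheme \<Rightarrow> ('a \<Rightarrow> 'x \<Rightarrow> 'x) \<Rightarrow> ('x \<Rightarrow> 'a \<Rightarrow> 'x)
   \<Rightarrow> ('x \<Rightarrow> ('x \<times> 'x \<Rightarrow> int)) \<Rightarrow> ('x \<Rightarrow> 'a) \<Rightarrow> 'x \<Rightarrow> bool" where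
  "grouplike A C lact ract Delta eps g \<longleftrightarrow> g \<in> carrier C \<and>
     (\<lambda>p. Delta g p - fs_single (g, g) p)
        \<in> tens_rel (carrier A) (carrier C) (add C) ract (carrier C) (add C) lact \<and>
     eps g = \<one>\<^bsub>A\<^esub>"

definition coinvariants ::
  "('a,'d) ring_scheme \<Rightarrow> ('a \<Rightarrow> 'x \<Rightarrow> 'x) \<Rightarrow> ('x \<Rightarrow> 'a \<Rightarrow> 'x) \<Rightarrow> 'x \<Rightarrow> 'a set" where
  "coinvariants A lact ract g = {b \<in> carrier A. lact b g = ract g b}"

definition can_map ::
  "('x,'e) ring_scheme \<Rightarrow> ('a \<Rightarrow> 'x \<Rightarrow> 'x) \<Rightarrow> ('x \<Rightarrow> 'a \<Rightarrow> 'x) \<Rightarrow> 'x \<Rightarrow> ('a \<times> 'a \<Rightarrow> int) \<Rightarrow> 'x" where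
  "can_map C lact ract g f =
     (\<Oplus>\<^bsub>C\<^esub> p\<in>{p. f p \<noteq> 0}. [f p] \<cdot>\<^bsub>C\<^esub> lact (fst p) (ract g (snd p)))"

definition galois_coring ::
  "('a,'d) ring_scheme \<Rightarrow> ('x,'e) ring_scheme \<Rightarrow> ('a \<Rightarrow> 'x \<Rightarrow> 'x) \<Rightarrow> ('x \<Rightarrow> 'a \<Rightarrow> 'x)
   \<Rightarrow> ('x \<Rightarrow> ('x \<times> 'x \<Rightarrow> int)) \<Rightarrow> ('x \<Rightarrow> 'a) \<Rightarrow> 'x \<Rightarrow> bool" where
  "galois_coring A C lact ract Delta eps g \<longleftrightarrow>
     grouplike A C lact ract Delta eps g \<and>
     (\<forall>f\<in>fsums (carrier A \<times> carrier A).
        can_map C lact ract g f = \<zero>\<^bsub>C\<^esub> \<longleftrightarrow>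
        f \<in> tens_rel (coinvariants A lact ract g) (carrier A) (add A) (monoid.mult A)
                      (carrier A) (add A) (monoid.mult A)) \<and>
     (\<forall>c\<in>carrier C. \<exists>f\<in>fsums (carrier A \<times> carrier A). can_map C lact ract g f = c)"

definition covering :: "('b,'c) ring_scheme \<Rightarrow> ('i \<Rightarrow> 'b set) \<Rightarrow> 'i set \<Rightarrow> bool" where
  "covering B J I \<longleftrightarrow> finite I \<and> (\<forall>i\<in>I. ideal (J i) B) \<and>
     carrier B \<inter> (\<Inter>i\<in>I. J i) = {\<zero>\<^bsub>B\<^esub>}"

abbreviation cov_Bij :: "('b,'c) ring_scheme \<Rightarrow> ('i \<Rightarrow> 'b set) \<Rightarrow> 'i \<Rightarrow> 'i \<Rightarrow> 'b set ring" where
  "cov_Bij B J i j \<equiv> B Quot (J i <+>\<^bsub>B\<^esub> J j)"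

definition cov_pi :: "('b,'c) ring_scheme \<Rightarrow> ('i \<Rightarrow> 'b set) \<Rightarrow> 'i \<Rightarrow> 'b \<Rightarrow> 'b set" where
  "cov_pi B J i b = J i +>\<^bsub>B\<^esub> b"

definition cov_pij :: "('b,'c) ring_scheme \<Rightarrow> ('i \<Rightarrow> 'b set) \<Rightarrow> 'i \<Rightarrow> 'i \<Rightarrow> 'b \<Rightarrow> 'b set" where
  "cov_pij B J i j b = (J i <+>\<^bsub>B\<^esub> J j) +>\<^bsub>B\<^esub> b"

definition cov_pit :: "('b,'c) ring_scheme \<Rightarrow> ('i \<Rightarrow> 'b set) \<Rightarrow> 'i \<Rightarrow> 'i \<Rightarrow> 'b set \<Rightarrow> 'b set" where
  "cov_pit B J i j Y = (J i <+>\<^bsub>B\<^esub> J j) <+>\<^bsub>B\<^esub> Y"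

definition cov_A :: "('b,'c) ring_scheme \<Rightarrow> ('i \<Rightarrow> 'b set) \<Rightarrow> 'i set \<Rightarrow> ('i \<Rightarrow> 'b set) ring" where
  "cov_A B J I = \<lparr>carrier = (\<Pi>\<^sub>E i\<in>I. carrier (B Quot J i)),
      monoid.mult = (\<lambda>a a'. \<lambda>i\<in>I. a i \<otimes>\<^bsub>B Quot J i\<^esub> a' i),
      monoid.one = (\<lambda>i\<in>I. \<one>\<^bsub>B Quot J i\<^esub>),
      ring.zero = (\<lambda>i\<in>I. \<zero>\<^bsub>B Quot J i\<^esub>),
      ring.add = (\<lambda>a a'. \<lambda>i\<in>I. a i \<oplus>\<^bsub>B Quot J i\<^esub> a' i)\<rparr>"

definition cov_iota :: "('b,'c) ring_scheme \<Rightarrow> ('i \<Rightarrow> 'b set) \<Rightarrow> 'i set \<Rightarrow> 'b \<Rightarrow> ('i \<Rightarrow> 'b set)" where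
  "cov_iota B J I b = (\<lambda>i\<in>I. cov_pi B J i b)"

definition cov_Bc :: "('b,'c) ring_scheme \<Rightarrow> ('i \<Rightarrow> 'b set) \<Rightarrow> 'i set \<Rightarrow> ('i \<Rightarrow> 'b set) set" where
  "cov_Bc B J I = {a \<in> carrier (cov_A B J I).
      \<forall>i\<in>I. \<forall>j\<in>I. cov_pit B J i j (a i) = cov_pit B J j i (a j)}"

definition complete_covering :: "('b,'c) ring_scheme \<Rightarrow> ('i \<Rightarrow> 'b set) \<Rightarrow> 'i set \<Rightarrow> bool" where
  "complete_covering B J I \<longleftrightarrow> (\<forall>a\<in>cov_Bc B J I. \<exists>b\<in>carrier B. cov_iota B J I b = a)"

text \<open>C = direct sum of the B_ij (additive structure; the multiplication is the
componentwise one and is not used)\<close>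
definition cov_C :: "('b,'c) ring_scheme \<Rightarrow> ('i \<Rightarrow> 'b set) \<Rightarrow> 'i set \<Rightarrow> ('i \<times> 'i \<Rightarrow> 'b set) ring" where
  "cov_C B J I = \<lparr>carrier = (\<Pi>\<^sub>E p\<in>I \<times> I. carrier (cov_Bij B J (fst p) (snd p))),
      monoid.mult = (\<lambda>c c'. \<lambda>p\<in>I \<times> I. c p \<otimes>\<^bsub>cov_Bij B J (fst p) (snd p)\<^esub> c' p),
      monoid.one = (\<lambda>p\<in>I \<times> I. \<one>\<^bsub>cov_Bij B J (fst p) (snd p)\<^esub>),
      ring.zero = (\<lambda>p\<in>I \<times> I. \<zero>\<^bsub>cov_Bij B J (fst p) (snd p)\<^esub>),
      ring.add = (\<lambda>c c'. \<lambda>p\<in>I \<times> I. c p \<oplus>\<^bsub>cov_Bij B J (fst p) (snd p)\<^esub> c' p)\<rparr>"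

definition cov_lact :: "('b,'c) ring_scheme \<Rightarrow> ('i \<Rightarrow> 'b set) \<Rightarrow> 'i set
    \<Rightarrow> ('i \<Rightarrow> 'b set) \<Rightarrow> ('i \<times> 'i \<Rightarrow> 'b set) \<Rightarrow> ('i \<times> 'i \<Rightarrow> 'b set)" where
  "cov_lact B J I a c = (\<lambda>(j, k)\<in>I \<times> I. cov_pit B J j k (a j) \<otimes>\<^bsub>cov_Bij B J j k\<^esub> c (j, k))"

definition cov_ract :: "('b,'c) ring_scheme \<Rightarrow> ('i \<Rightarrow> 'b set) \<Rightarrow> 'i set
    \<Rightarrow> ('i \<times> 'i \<Rightarrow> 'b set) \<Rightarrow> ('i \<Rightarrow> 'b set) \<Rightarrow> ('i \<times> 'i \<Rightarrow> 'b set)" where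
  "cov_ract B J I c a' = (\<lambda>(j, k)\<in>I \<times> I. c (j, k) \<otimes>\<^bsub>cov_Bij B J j k\<^esub> cov_pit B J k j (a' k))"

definition cov_rep :: "('b,'c) ring_scheme \<Rightarrow> ('i \<Rightarrow> 'b set) \<Rightarrow> 'i \<Rightarrow> 'i \<Rightarrow> ('i \<times> 'i \<Rightarrow> 'b set) \<Rightarrow> 'b" where
  "cov_rep B J i j c = (SOME b. b \<in> carrier B \<and> c (i, j) = cov_pij B J i j b)"

definition cov_Delta :: "('b,'c) ring_scheme \<Rightarrow> ('i \<Rightarrow> 'b set) \<Rightarrow> 'i set
    \<Rightarrow> ('i \<times> 'i \<Rightarrow> 'b set) \<Rightarrow> (('i \<times> 'i \<Rightarrow> 'b set) \<times> ('i \<times> 'i \<Rightarrow> 'b set) \<Rightarrow> int)" where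
  "cov_Delta B J I c = (\<lambda>q. \<Sum>k\<in>I. fs_single
      ((\<lambda>(i, l)\<in>I \<times> I. cov_pij B J i l (cov_rep B J i k c)),
       (\<lambda>(m, j)\<in>I \<times> I. cov_pij B J m j (if k = j then \<one>\<^bsub>B\<^esub> else \<zero>\<^bsub>B\<^esub>))) q)"

definition cov_eps :: "('b,'c) ring_scheme \<Rightarrow> ('i \<Rightarrow> 'b set) \<Rightarrow> 'i set
    \<Rightarrow> ('i \<times> 'i \<Rightarrow> 'b set) \<Rightarrow> ('i \<Rightarrow> 'b set)" where
  "cov_eps B J I c = (\<lambda>i\<in>I. cov_pi B J i (cov_rep B J i i c))"

definition cov_g :: "('b,'c) ring_scheme \<Rightarrow> ('i \<Rightarrow> 'b set) \<Rightarrow> 'i set \<Rightarrow> ('i \<times> 'i \<Rightarrow> 'b set)" where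
  "cov_g B J I = (\<lambda>(i, j)\<in>I \<times> I. cov_pij B J i j \<one>\<^bsub>B\<^esub>)"

end

theory Submission
  imports Defs
begin

text \<open>
  The canonical map \<open>A \<otimes> A \<rightarrow> C\<close>, \<open>a \<otimes> a' \<mapsto> a g a'\<close>, sends \<open>e\<^sub>i x \<otimes> e\<^sub>j y\<close>
  (where \<open>e\<^sub>i x = unitA i x\<close>) to the matrix whose only nonzero entry is \<open>x y\<close> at \<open>(i, j)\<close>. Balancing over the constants
  \<open>\<iota>(b)\<close> rewrites every tensor as \<open>\<Sum>\<^sub>i\<^sub>j e\<^sub>i 1 \<otimes> e\<^sub>j z\<^sub>i\<^sub>j\<close>, and this sum only depends on the
  classes of the \<open>z\<^sub>i\<^sub>j\<close> in \<open>B\<^sub>i\<^sub>j\<close>, because an element of \<open>J\<^sub>i\<close> moved across the tensor sign is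
  killed by \<open>e\<^sub>i\<close>. This normal form inverts the canonical map. Only constants \<open>\<iota>(b)\<close>, which
  are coinvariant, are moved across.

  For part (2), flatness of \<open>A\<close> applied to the inclusion \<open>K + J\<^sub>n \<subseteq> B\<close> gives the modular law
  \<open>J\<^sub>m \<inter> (K + J\<^sub>n) \<subseteq> (J\<^sub>m \<inter> K) + J\<^sub>n\<close>: for \<open>w\<close> on the left, \<open>e\<^sub>m \<otimes> w\<close> vanishes in
  \<open>A \<otimes> B\<close> since \<open>e\<^sub>m \<iota>(w) = 0\<close>, hence in \<open>A \<otimes> (K + J\<^sub>n)\<close>, where the balanced map
  \<open>(a, s) \<mapsto> a\<^sub>m s\<close> modulo \<open>(J\<^sub>m \<inter> K) + J\<^sub>n\<close> sends it to the class of \<open>w\<close>. The modular law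
  lets one solve compatible congruences \<open>b \<equiv> x\<^sub>i (mod J\<^sub>i)\<close> one index at a time, which is
  completeness.
\<close>

lemma fsums_zero [simp]: "(\<lambda>_. 0) \<in> fsums S"
  by (simp add: fsums_def)

lemma fsums_add: "f \<in> fsums S \<Longrightarrow> h \<in> fsums S \<Longrightarrow> (\<lambda>p. f p + h p) \<in> fsums S"
proof -
  assume "f \<in> fsums S" "h \<in> fsums S"
  moreover have "{p. f p + h p \<noteq> 0} \<subseteq> {p. f p \<noteq> 0} \<union> {p. h p \<noteq> 0}" by auto
  ultimately show ?thesis unfolding fsums_def by (auto intro: finite_subset)
qed

lemma fsums_neg: "f \<in> fsums S \<Longrightarrow> (\<lambda>p. - f p) \<in> fsums S"
  by (simp add: fsums_def)

lemma fsums_diff: "f \<in> fsums S \<Longrightarrow> h \<in> fsums S \<Longrightarrow> (\<lambda>p. f p - h p) \<in> fsums S"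
  using fsums_add[OF _ fsums_neg] by simp

lemma fsums_single: "p \<in> S \<Longrightarrow> fs_single p \<in> fsums S"
proof -
  have "{q. fs_single p q \<noteq> 0} = {p}" by (auto simp: fs_single_def)
  then show "p \<in> S \<Longrightarrow> ?thesis" by (simp add: fsums_def)
qed

lemma fsums_smult: "f \<in> fsums S \<Longrightarrow> (\<lambda>q. k * f q) \<in> fsums S"
  unfolding fsums_def by (auto elim: finite_subset[rotated])

lemma fsums_sum:
  "finite D \<Longrightarrow> (\<And>d. d \<in> D \<Longrightarrow> F d \<in> fsums S) \<Longrightarrow> (\<lambda>p. \<Sum>d\<in>D. F d p) \<in> fsums S"
  by (induction D rule: finite_induct) (simp_all add: fsums_add)

lemma fsums_smult_induct:
  assumes f: "f \<in> fsums S" "P f"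
    and zero: "P (\<lambda>_. 0)"
    and add: "\<And>f h. f \<in> fsums S \<Longrightarrow> h \<in> fsums S \<Longrightarrow> P f \<Longrightarrow> P h \<Longrightarrow> P (\<lambda>q. f q + h q)"
    and neg: "\<And>f. f \<in> fsums S \<Longrightarrow> P f \<Longrightarrow> P (\<lambda>q. - f q)"
  shows "P (\<lambda>q. k * f q)"
proof (induction k rule: int_induct[where k = 0])
  case base
  show ?case using zero by simp
next
  case (step1 k)
  have "P (\<lambda>q. k * f q + f q)" using add[OF fsums_smult f(1) step1.IH f(2)] f(1) by simp
  then show ?case by (simp add: algebra_simps)
next
  case (step2 k)
  have "P (\<lambda>q. k * f q + - f q)"
    using add[OF fsums_smult fsums_neg step2.IH neg] f by simp
  then show ?case by (simp add: algebra_simps)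
qed

lemma fsums_induct [consumes 1, case_names zero single add neg]:
  assumes f: "f \<in> fsums S"
    and zero: "P (\<lambda>_. 0)"
    and single: "\<And>p. p \<in> S \<Longrightarrow> P (fs_single p)"
    and add: "\<And>f h. f \<in> fsums S \<Longrightarrow> h \<in> fsums S \<Longrightarrow> P f \<Longrightarrow> P h \<Longrightarrow> P (\<lambda>q. f q + h q)"
    and neg: "\<And>f. f \<in> fsums S \<Longrightarrow> P f \<Longrightarrow> P (\<lambda>q. - f q)"
  shows "P f"
proof -
  have "f \<in> fsums S \<longrightarrow> P f" if "finite D" "{p. f p \<noteq> 0} \<subseteq> D" for D f
    using that
  proof (induction D arbitrary: f rule: finite_induct)
    case empty
    then have "f = (\<lambda>_. 0)" by auto
    then show ?case using zero by simp
  next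
    case (insert x D)
    show ?case
    proof
      assume fS: "f \<in> fsums S"
      define f0 where "f0 = f(x := 0)"
      have f0S: "f0 \<in> fsums S"
        using fS unfolding fsums_def f0_def by (auto elim: finite_subset[rotated])
      have "{p. f0 p \<noteq> 0} \<subseteq> D" using insert.prems by (auto simp: f0_def)
      then have "P f0" using insert.IH f0S by blast
      show "P f"
      proof (cases "f x = 0")
        case True
        then show ?thesis using \<open>P f0\<close> by (simp add: f0_def fun_upd_idem)
      next
        case False
        then have "x \<in> S" using fS by (auto simp: fsums_def)
        then have "P (\<lambda>q. f x * fs_single x q)"
          using fsums_smult_induct[where f = "fs_single x" and k = "f x" and P = P,
              OF fsums_single single]
            zero add neg by blast
        then have "P (\<lambda>q. f0 q + f x * fs_single x q)"
          by (rule add[OF f0S fsums_smult[OF fsums_single[OF \<open>x \<in> S\<close>]] \<open>P f0\<close>])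
        moreover have "(\<lambda>q. f0 q + f x * fs_single x q) = f"
          by (auto simp: f0_def fs_single_def)
        ultimately show ?thesis by simp
      qed
    qed
  qed
  then show ?thesis using f by (auto simp: fsums_def)
qed

lemma tens_rel_fsums:
  assumes "h \<in> tens_rel R M addM actM N addN actN"
    and "\<And>m m'. m \<in> M \<Longrightarrow> m' \<in> M \<Longrightarrow> addM m m' \<in> M"
    and "\<And>n n'. n \<in> N \<Longrightarrow> n' \<in> N \<Longrightarrow> addN n n' \<in> N"
    and "\<And>m r. m \<in> M \<Longrightarrow> r \<in> R \<Longrightarrow> actM m r \<in> M"
    and "\<And>n r. n \<in> N \<Longrightarrow> r \<in> R \<Longrightarrow> actN r n \<in> N"
  shows "h \<in> fsums (M \<times> N)"
  using assms(1)
  by induction (use assms(2-) in \<open>auto intro!: fsums_add fsums_neg fsums_diff fsums_single\<close>)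

locale tensor_relation =
  fixes R :: "'r set" and M :: "'m set" and addM :: "'m \<Rightarrow> 'm \<Rightarrow> 'm" and actM :: "'m \<Rightarrow> 'r \<Rightarrow> 'm"
    and N :: "'n set" and addN :: "'n \<Rightarrow> 'n \<Rightarrow> 'n" and actN :: "'r \<Rightarrow> 'n \<Rightarrow> 'n"
begin

abbreviation Rel :: "('m \<times> 'n \<Rightarrow> int) set" where
  "Rel \<equiv> tens_rel R M addM actM N addN actN"

definition tens_eq :: "('m \<times> 'n \<Rightarrow> int) \<Rightarrow> ('m \<times> 'n \<Rightarrow> int) \<Rightarrow> bool" where
  "tens_eq f h \<longleftrightarrow> (\<lambda>p. f p - h p) \<in> Rel"

lemma tens_eq_zero_iff: "tens_eq f (\<lambda>_. 0) \<longleftrightarrow> f \<in> Rel"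
  by (simp add: tens_eq_def)

lemma tens_eq_refl: "tens_eq f f"
  by (simp add: tens_eq_def tens_rel.zero)

lemma tens_eq_sym: "tens_eq f h \<Longrightarrow> tens_eq h f"
  unfolding tens_eq_def by (drule tens_rel.neg) simp

lemma tens_eq_trans [trans]: "tens_eq f h \<Longrightarrow> tens_eq h k \<Longrightarrow> tens_eq f k"
  unfolding tens_eq_def by (drule (1) tens_rel.add) simp

lemma tens_eq_add: "tens_eq f1 h1 \<Longrightarrow> tens_eq f2 h2 \<Longrightarrow> tens_eq (\<lambda>p. f1 p + f2 p) (\<lambda>p. h1 p + h2 p)"
  unfolding tens_eq_def by (drule (1) tens_rel.add) (simp add: algebra_simps)

lemma tens_eq_neg: "tens_eq f h \<Longrightarrow> tens_eq (\<lambda>p. - f p) (\<lambda>p. - h p)"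
  unfolding tens_eq_def by (drule tens_rel.neg) (simp add: algebra_simps)

lemma tens_eq_sum:
  "finite D \<Longrightarrow> (\<And>d. d \<in> D \<Longrightarrow> tens_eq (F d) (G d)) \<Longrightarrow>
    tens_eq (\<lambda>p. \<Sum>d\<in>D. F d p) (\<lambda>p. \<Sum>d\<in>D. G d p)"
  by (induction D rule: finite_induct) (simp_all add: tens_eq_refl tens_eq_add)

lemma Rel_sum: "finite D \<Longrightarrow> (\<And>d. d \<in> D \<Longrightarrow> F d \<in> Rel) \<Longrightarrow> (\<lambda>p. \<Sum>d\<in>D. F d p) \<in> Rel"
  using tens_eq_sum[of D F "\<lambda>_ _. 0"] by (simp add: tens_eq_zero_iff)

lemma tens_eq_add_Rel: "h \<in> Rel \<Longrightarrow> tens_eq (\<lambda>p. f p + h p) f"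
  using tens_eq_add[OF tens_eq_refl, of h "\<lambda>_. 0" f] by (simp add: tens_eq_zero_iff)

lemma tens_eq_Rel: "tens_eq f h \<Longrightarrow> h \<in> Rel \<Longrightarrow> f \<in> Rel"
  using tens_eq_trans by (auto simp flip: tens_eq_zero_iff)

lemma tens_eq_bal:
  "m \<in> M \<Longrightarrow> r \<in> R \<Longrightarrow> n \<in> N \<Longrightarrow> tens_eq (fs_single (actM m r, n)) (fs_single (m, actN r n))"
  unfolding tens_eq_def by (rule tens_rel.bal)

lemma tens_eq_addl: "m \<in> M \<Longrightarrow> m' \<in> M \<Longrightarrow> n \<in> N \<Longrightarrow>
    tens_eq (fs_single (addM m m', n)) (\<lambda>p. fs_single (m, n) p + fs_single (m', n) p)"
  unfolding tens_eq_def by (drule (2) tens_rel.addl) (simp add: algebra_simps)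

lemma tens_eq_addr: "m \<in> M \<Longrightarrow> n \<in> N \<Longrightarrow> n' \<in> N \<Longrightarrow>
    tens_eq (fs_single (m, addN n n')) (\<lambda>p. fs_single (m, n) p + fs_single (m, n') p)"
  unfolding tens_eq_def by (drule (2) tens_rel.addr) (simp add: algebra_simps)

lemma Rel_zero_left: "z \<in> M \<Longrightarrow> addM z z = z \<Longrightarrow> n \<in> N \<Longrightarrow> fs_single (z, n) \<in> Rel"
proof -
  assume z: "z \<in> M" "addM z z = z" and "n \<in> N"
  then have "(\<lambda>p. fs_single (addM z z, n) p - fs_single (z, n) p - fs_single (z, n) p) \<in> Rel"
    by (intro tens_rel.addl)
  then show ?thesis using tens_rel.neg by (fastforce simp: z)
qed

lemma Rel_zero_right: "z \<in> N \<Longrightarrow> addN z z = z \<Longrightarrow> m \<in> M \<Longrightarrow> fs_single (m, z) \<in> Rel"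
proof -
  assume z: "z \<in> N" "addN z z = z" and "m \<in> M"
  then have "(\<lambda>p. fs_single (m, addN z z) p - fs_single (m, z) p - fs_single (m, z) p) \<in> Rel"
    by (intro tens_rel.addr)
  then show ?thesis using tens_rel.neg by (fastforce simp: z)
qed

lemma tens_eq_finsum_left:
  assumes G: "abelian_monoid G" "M = carrier G" "addM = add G"
    and S: "finite S" "u \<in> S \<rightarrow> M" and n: "n \<in> N"
  shows "tens_eq (fs_single (finsum G u S, n)) (\<lambda>p. \<Sum>i\<in>S. fs_single (u i, n) p)"
  using S
proof (induction S rule: finite_induct)
  case empty
  interpret abelian_monoid G by (fact G)
  have "fs_single (\<zero>\<^bsub>G\<^esub>, n) \<in> Rel" using n G(2,3) by (intro Rel_zero_left) auto
  then show ?case by (simp add: tens_eq_zero_iff)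
next
  case (insert i S)
  interpret abelian_monoid G by (fact G)
  have sum: "finsum G u (insert i S) = addM (u i) (finsum G u S)"
    using insert G(2,3) by (simp add: finsum_insert)
  have "u i \<in> M" "finsum G u S \<in> M" using insert.prems G(2) by auto
  then have "tens_eq (fs_single (finsum G u (insert i S), n))
      (\<lambda>p. fs_single (u i, n) p + fs_single (finsum G u S, n) p)"
    unfolding sum using n by (rule tens_eq_addl)
  also have "tens_eq \<dots> (\<lambda>p. fs_single (u i, n) p + (\<Sum>i\<in>S. fs_single (u i, n) p))"
    using insert by (intro tens_eq_add tens_eq_refl) auto
  finally show ?case using insert by simp
qed

lemma tens_eq_finsum_right:
  assumes G: "abelian_monoid G" "N = carrier G" "addN = add G"
    and S: "finite S" "u \<in> S \<rightarrow> N" and m: "m \<in> M"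
  shows "tens_eq (fs_single (m, finsum G u S)) (\<lambda>p. \<Sum>i\<in>S. fs_single (m, u i) p)"
  using S
proof (induction S rule: finite_induct)
  case empty
  interpret abelian_monoid G by (fact G)
  have "fs_single (m, \<zero>\<^bsub>G\<^esub>) \<in> Rel" using m G(2,3) by (intro Rel_zero_right) auto
  then show ?case by (simp add: tens_eq_zero_iff)
next
  case (insert i S)
  interpret abelian_monoid G by (fact G)
  have sum: "finsum G u (insert i S) = addN (u i) (finsum G u S)"
    using insert G(2,3) by (simp add: finsum_insert)
  have "u i \<in> N" "finsum G u S \<in> N" using insert.prems G(2) by auto
  with m have "tens_eq (fs_single (m, finsum G u (insert i S)))
      (\<lambda>p. fs_single (m, u i) p + fs_single (m, finsum G u S) p)"
    unfolding sum by (rule tens_eq_addr)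
  also have "tens_eq \<dots> (\<lambda>p. fs_single (m, u i) p + (\<Sum>i\<in>S. fs_single (m, u i) p))"
    using insert by (intro tens_eq_add tens_eq_refl) auto
  finally show ?case using insert by simp
qed

end

definition fs_lift :: "('g, 'x) ring_scheme \<Rightarrow> ('p \<Rightarrow> 'g) \<Rightarrow> ('p \<Rightarrow> int) \<Rightarrow> 'g" where
  "fs_lift G \<phi> h = (\<Oplus>\<^bsub>G\<^esub>p\<in>{p. h p \<noteq> 0}. [h p] \<cdot>\<^bsub>G\<^esub> \<phi> p)"

lemma add_pow_int_0 [simp]: "add_pow G (0::int) x = \<zero>\<^bsub>G\<^esub>"
  by (simp add: add_pow_def)

context abelian_group
begin

lemma add_minus_cancel_both: "x \<in> carrier G \<Longrightarrow> y \<in> carrier G \<Longrightarrow> x \<oplus> y \<ominus> x \<ominus> y = \<zero>"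
proof -
  assume "x \<in> carrier G" "y \<in> carrier G"
  then have "x \<oplus> y \<ominus> x \<ominus> y = (x \<ominus> x) \<oplus> (y \<ominus> y)" by (simp add: a_minus_def a_assoc a_lcomm)
  with \<open>x \<in> carrier G\<close> \<open>y \<in> carrier G\<close> show ?thesis by (simp add: a_minus_def r_neg)
qed

lemma fs_lift_superset:
  assumes "finite D" "{p. h p \<noteq> 0} \<subseteq> D" "\<phi> \<in> D \<rightarrow> carrier G"
  shows "fs_lift G \<phi> h = (\<Oplus>p\<in>D. add_pow G (h p) (\<phi> p))"
  unfolding fs_lift_def
  by (rule add.finprod_mono_neutral_cong_left) (use assms in auto)

lemma fs_lift_closed: "h \<in> fsums S \<Longrightarrow> \<phi> \<in> S \<rightarrow> carrier G \<Longrightarrow> fs_lift G \<phi> h \<in> carrier G"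
  unfolding fs_lift_def fsums_def by (auto intro!: finsum_closed)

lemma fs_lift_zero [simp]: "fs_lift G \<phi> (\<lambda>_. 0) = \<zero>"
  by (simp add: fs_lift_def)

lemma fs_lift_add:
  assumes f: "f \<in> fsums S" and h: "h \<in> fsums S" and \<phi>: "\<phi> \<in> S \<rightarrow> carrier G"
  shows "fs_lift G \<phi> (\<lambda>p. f p + h p) = fs_lift G \<phi> f \<oplus> fs_lift G \<phi> h"
proof -
  define D where "D = {p. f p \<noteq> 0} \<union> {p. h p \<noteq> 0}"
  have D: "finite D" "\<phi> \<in> D \<rightarrow> carrier G" using f h \<phi> by (auto simp: D_def fsums_def)
  have "fs_lift G \<phi> (\<lambda>p. f p + h p) = (\<Oplus>p\<in>D. add_pow G (f p + h p) (\<phi> p))"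
    using D by (intro fs_lift_superset) (auto simp: D_def)
  also have "\<dots> = (\<Oplus>p\<in>D. add_pow G (f p) (\<phi> p) \<oplus> add_pow G (h p) (\<phi> p))"
    using D by (intro finsum_cong') (auto simp: add.int_pow_mult Pi_iff)
  also have "\<dots> = (\<Oplus>p\<in>D. add_pow G (f p) (\<phi> p)) \<oplus> (\<Oplus>p\<in>D. add_pow G (h p) (\<phi> p))"
    using D by (intro finsum_addf) auto
  also have "\<dots> = fs_lift G \<phi> f \<oplus> fs_lift G \<phi> h"
    using D by (simp add: fs_lift_superset[of D] D_def)
  finally show ?thesis .
qed

lemma fs_lift_neg:
  assumes f: "f \<in> fsums S" and \<phi>: "\<phi> \<in> S \<rightarrow> carrier G"
  shows "fs_lift G \<phi> (\<lambda>p. - f p) = \<ominus> fs_lift G \<phi> f"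
proof -
  have "fs_lift G \<phi> (\<lambda>p. - f p) \<oplus> fs_lift G \<phi> f = \<zero>"
    using fs_lift_add[OF fsums_neg[OF f] f \<phi>] by simp
  then show ?thesis
    using fs_lift_closed[OF f \<phi>] fs_lift_closed[OF fsums_neg[OF f] \<phi>]
      by (simp add: add.inv_equality)
qed

lemma fs_lift_diff:
  assumes "f \<in> fsums S" "h \<in> fsums S" "\<phi> \<in> S \<rightarrow> carrier G"
  shows "fs_lift G \<phi> (\<lambda>p. f p - h p) = fs_lift G \<phi> f \<ominus> fs_lift G \<phi> h"
  using fs_lift_add[OF assms(1) fsums_neg[OF assms(2)] assms(3)] fs_lift_neg[OF assms(2,3)]
  by (simp add: a_minus_def)

lemma fs_lift_single: "p \<in> S \<Longrightarrow> \<phi> \<in> S \<rightarrow> carrier G \<Longrightarrow> fs_lift G \<phi> (fs_single p) = \<phi> p"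
proof -
  have "{q. fs_single p q \<noteq> 0} = {p}" by (auto simp: fs_single_def)
  then show "p \<in> S \<Longrightarrow> \<phi> \<in> S \<rightarrow> carrier G \<Longrightarrow> ?thesis"
    by (auto simp: fs_lift_def fs_single_def Pi_iff)
qed

lemma fs_lift_sum_single:
  assumes "finite D" "\<And>d. d \<in> D \<Longrightarrow> h d \<in> S" "\<phi> \<in> S \<rightarrow> carrier G"
  shows "fs_lift G \<phi> (\<lambda>q. \<Sum>d\<in>D. fs_single (h d) q) = (\<Oplus>d\<in>D. \<phi> (h d))"
  using assms
proof (induction D rule: finite_induct)
  case (insert x D)
  have "fs_single (h x) \<in> fsums S" "(\<lambda>q. \<Sum>d\<in>D. fs_single (h d) q) \<in> fsums S"
    using insert.prems by (auto intro!: fsums_single fsums_sum[OF insert.hyps(1)])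
  then have "fs_lift G \<phi> (\<lambda>q. \<Sum>d\<in>insert x D. fs_single (h d) q)
      = \<phi> (h x) \<oplus> fs_lift G \<phi> (\<lambda>q. \<Sum>d\<in>D. fs_single (h d) q)"
    using insert fs_lift_add[OF _ _ insert.prems(2)] fs_lift_single[OF _ insert.prems(2)] by simp
  then show ?case using insert by (subst finsum_insert) auto
qed simp

lemma fs_lift_single_diff3:
  assumes "p \<in> S" "p' \<in> S" "p'' \<in> S" "\<phi> \<in> S \<rightarrow> carrier G"
  shows "fs_lift G \<phi> (\<lambda>q. fs_single p q - fs_single p' q - fs_single p'' q) = \<phi> p \<ominus> \<phi> p' \<ominus> \<phi> p''"
proof -
  have "fs_lift G \<phi> (\<lambda>q. fs_single p q - fs_single p' q - fs_single p'' q)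
      = fs_lift G \<phi> (\<lambda>q. fs_single p q - fs_single p' q) \<ominus> fs_lift G \<phi> (fs_single p'')"
    using assms by (intro fs_lift_diff[where S = S] fsums_diff fsums_single)
  also have "\<dots> = \<phi> p \<ominus> \<phi> p' \<ominus> \<phi> p''"
    using assms by (simp add: fs_lift_diff[where S = S] fsums_single fs_lift_single)
  finally show ?thesis .
qed

lemma fs_lift_tens_rel:
  assumes h: "h \<in> tens_rel R M addM actM N addN actN"
    and cM: "\<And>m m'. m \<in> M \<Longrightarrow> m' \<in> M \<Longrightarrow> addM m m' \<in> M"
    and cN: "\<And>n n'. n \<in> N \<Longrightarrow> n' \<in> N \<Longrightarrow> addN n n' \<in> N"
    and aM: "\<And>m r. m \<in> M \<Longrightarrow> r \<in> R \<Longrightarrow> actM m r \<in> M"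
    and aN: "\<And>n r. n \<in> N \<Longrightarrow> r \<in> R \<Longrightarrow> actN r n \<in> N"
    and \<phi>: "\<phi> \<in> M \<times> N \<rightarrow> carrier G"
    and \<phi>_addl: "\<And>m m' n. m \<in> M \<Longrightarrow> m' \<in> M \<Longrightarrow> n \<in> N \<Longrightarrow> \<phi> (addM m m', n) = \<phi> (m, n) \<oplus> \<phi> (m', n)"
    and \<phi>_addr: "\<And>m n n'. m \<in> M \<Longrightarrow> n \<in> N \<Longrightarrow> n' \<in> N \<Longrightarrow> \<phi> (m, addN n n') = \<phi> (m, n) \<oplus> \<phi> (m, n')"
    and \<phi>_bal: "\<And>m r n. m \<in> M \<Longrightarrow> r \<in> R \<Longrightarrow> n \<in> N \<Longrightarrow> \<phi> (actM m r, n) = \<phi> (m, actN r n)"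
  shows "fs_lift G \<phi> h = \<zero>"
  using h
proof induction
  case (add f h)
  have "f \<in> fsums (M \<times> N)" "h \<in> fsums (M \<times> N)"
    using tens_rel_fsums[OF add.hyps(1) cM cN aM aN] tens_rel_fsums[OF add.hyps(2) cM cN aM aN]
    by simp_all
  then show ?case using add.IH fs_lift_add[OF _ _ \<phi>] by simp
next
  case (neg f)
  then show ?case
    using tens_rel_fsums[OF neg.hyps(1) cM cN aM aN] fs_lift_neg[OF _ \<phi>] by simp
next
  case (addl m m' n)
  then have "(addM m m', n) \<in> M \<times> N" "(m, n) \<in> M \<times> N" "(m', n) \<in> M \<times> N" using cM by auto
  then show ?case using \<phi>
    by (simp add: fs_lift_single_diff3[OF _ _ _ \<phi>] \<phi>_addl addl.hyps add_minus_cancel_both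
        funcset_mem[OF \<phi>])
next
  case (addr m n n')
  then have "(m, addN n n') \<in> M \<times> N" "(m, n) \<in> M \<times> N" "(m, n') \<in> M \<times> N" using cN by auto
  then show ?case using \<phi>
    by (simp add: fs_lift_single_diff3[OF _ _ _ \<phi>] \<phi>_addr addr.hyps add_minus_cancel_both
        funcset_mem[OF \<phi>])
next
  case (bal m r n)
  then have "(actM m r, n) \<in> M \<times> N" "(m, actN r n) \<in> M \<times> N" using aM aN by auto
  then show ?case
    using \<phi>
      by (simp add: \<phi>_bal bal.hyps fs_lift_diff[OF _ _ \<phi>] fsums_single fs_lift_single[OF _ \<phi>]
          r_neg a_minus_def funcset_mem[OF \<phi>])
qed simp_all

end

context ring
begin

lemma ideal_subset_set_add_left: "ideal L R \<Longrightarrow> ideal L' R \<Longrightarrow> L \<subseteq> L <+>\<^bsub>R\<^esub> L'"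
proof
  fix x assume "ideal L R" "ideal L' R" "x \<in> L"
  then have "x = x \<oplus> \<zero>" "\<zero> \<in> L'"
    by (auto simp: additive_subgroup.zero_closed ideal.axioms(1) ideal.Icarr)
  with \<open>x \<in> L\<close> show "x \<in> L <+>\<^bsub>R\<^esub> L'" by (auto simp: set_add_def')
qed

lemma ideal_subset_set_add_right: "ideal L R \<Longrightarrow> ideal L' R \<Longrightarrow> L' \<subseteq> L <+>\<^bsub>R\<^esub> L'"
  using ideal_subset_set_add_left set_add_comm ideal.axioms(1) additive_subgroup.a_subset
  by metis

lemma set_add_a_r_coset_absorb:
  assumes L: "ideal L R" and L': "ideal L' R" and sub: "L' \<subseteq> L" and x: "x \<in> carrier R"
  shows "L <+>\<^bsub>R\<^esub> (L' +> x) = L +> x"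
proof -
  interpret L: ideal L R by fact
  interpret L': ideal L' R by fact
  have "L <+>\<^bsub>R\<^esub> (L' +> x) = (L <+>\<^bsub>R\<^esub> L') +> x"
    using x by (simp add: a_setmult_rcos_assoc L.a_subset L'.a_subset)
  also have "L <+>\<^bsub>R\<^esub> L' = L"
    using ideal_subset_set_add_left[OF L L'] sub L.a_closed by (auto simp: set_add_def')
  finally show ?thesis .
qed

lemma FactRing_carrier: "carrier (R Quot L) = {L +> x | x. x \<in> carrier R}"
  by (auto simp: FactRing_def A_RCOSETS_def')

lemma FactRing_add:
  "ideal L R \<Longrightarrow> x \<in> carrier R \<Longrightarrow> y \<in> carrier R \<Longrightarrow> (L +> x) \<oplus>\<^bsub>R Quot L\<^esub> (L +> y) = L +> (x \<oplus> y)"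
  by (simp add: FactRing_def ideal.a_rcos_sum)

lemma FactRing_mult:
  "ideal L R \<Longrightarrow> x \<in> carrier R \<Longrightarrow> y \<in> carrier R \<Longrightarrow> (L +> x) \<otimes>\<^bsub>R Quot L\<^esub> (L +> y) = L +> (x \<otimes> y)"
  by (simp add: FactRing_def ideal.rcoset_mult_add)

lemma FactRing_zero: "ideal L R \<Longrightarrow> \<zero>\<^bsub>R Quot L\<^esub> = L +> \<zero>"
  by (simp add: FactRing_def additive_subgroup.a_subset ideal.axioms(1))

lemma FactRing_one: "\<one>\<^bsub>R Quot L\<^esub> = L +> \<one>"
  by (simp add: FactRing_def)

end

lemma abelian_group_PiE:
  fixes P :: "('i \<Rightarrow> 'a) ring" (structure)
  assumes G: "\<And>i. i \<in> I \<Longrightarrow> abelian_group (G i)"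
    and P: "carrier P = (\<Pi>\<^sub>E i\<in>I. carrier (G i))" "(\<oplus>\<^bsub>P\<^esub>) = (\<lambda>x y. \<lambda>i\<in>I. x i \<oplus>\<^bsub>G i\<^esub> y i)"
      "\<zero>\<^bsub>P\<^esub> = (\<lambda>i\<in>I. \<zero>\<^bsub>G i\<^esub>)"
  shows "abelian_group P"
proof (rule comm_group_abelian_groupI)
  have "add_monoid P = product_group I (\<lambda>i. add_monoid (G i))"
    using P by (simp add: product_group_def)
  moreover have "comm_group (product_group I (\<lambda>i. add_monoid (G i)))"
  proof (rule group.group_comm_groupI)
    show "group (product_group I (\<lambda>i. add_monoid (G i)))"
      using G by (simp add: abelian_group.a_group)
  next
    fix x y assume "x \<in> carrier (product_group I (\<lambda>i. add_monoid (G i)))"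
      "y \<in> carrier (product_group I (\<lambda>i. add_monoid (G i)))"
    then show "x \<otimes>\<^bsub>product_group I (\<lambda>i. add_monoid (G i))\<^esub> y
        = y \<otimes>\<^bsub>product_group I (\<lambda>i. add_monoid (G i))\<^esub> x"
      using G by (auto intro!: restrict_ext abelian_monoid.a_comm dest: abelian_group.axioms(1))
  qed
  ultimately show "comm_group (add_monoid P)" by simp
qed

locale ideal_family = ring B for B :: "('b, 'c) ring_scheme" (structure) +
  fixes J :: "'i \<Rightarrow> 'b set" and I :: "'i set"
  assumes finite_I: "finite I" and ideal_J: "\<And>i. i \<in> I \<Longrightarrow> ideal (J i) B"
begin

abbreviation "A \<equiv> cov_A B J I"
abbreviation "C \<equiv> cov_C B J I"
abbreviation "lact \<equiv> cov_lact B J I"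
abbreviation "ract \<equiv> cov_ract B J I"
abbreviation "g \<equiv> cov_g B J I"
abbreviation J2 :: "'i \<Rightarrow> 'i \<Rightarrow> 'b set" where "J2 i j \<equiv> J i <+>\<^bsub>B\<^esub> J j"

definition vecA :: "('i \<Rightarrow> 'b) \<Rightarrow> 'i \<Rightarrow> 'b set" where
  "vecA x = (\<lambda>k\<in>I. cov_pi B J k (x k))"

definition matC :: "('i \<Rightarrow> 'i \<Rightarrow> 'b) \<Rightarrow> 'i \<times> 'i \<Rightarrow> 'b set" where
  "matC u = (\<lambda>(i, j)\<in>I \<times> I. cov_pij B J i j (u i j))"

definition repA :: "'i \<Rightarrow> ('i \<Rightarrow> 'b set) \<Rightarrow> 'b" where
  "repA k a = (SOME x. x \<in> carrier B \<and> a k = J k +> x)"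

lemma ideal_J2: "i \<in> I \<Longrightarrow> j \<in> I \<Longrightarrow> ideal (J2 i j) B"
  by (simp add: add_ideals ideal_J)

lemma J_subset_carrier: "i \<in> I \<Longrightarrow> J i \<subseteq> carrier B"
  by (simp add: ideal.axioms(1) additive_subgroup.a_subset ideal_J)

lemma J_subset_J2_left: "i \<in> I \<Longrightarrow> j \<in> I \<Longrightarrow> J i \<subseteq> J2 i j"
  by (simp add: ideal_J ideal_subset_set_add_left)

lemma J_subset_J2_right: "i \<in> I \<Longrightarrow> j \<in> I \<Longrightarrow> J j \<subseteq> J2 i j"
  by (simp add: ideal_J ideal_subset_set_add_right)

lemma J2_comm: "i \<in> I \<Longrightarrow> j \<in> I \<Longrightarrow> J2 i j = J2 j i"
  by (simp add: J_subset_carrier set_add_comm)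

lemma J2_self: "i \<in> I \<Longrightarrow> J2 i i = J i"
  by (simp add: ideal.axioms(1) additive_subgroup.a_subgroup ideal_J subgroup_add_id)

lemma carrier_A: "carrier A = (\<Pi>\<^sub>E k\<in>I. carrier (B Quot J k))"
  by (simp add: cov_A_def)

lemma carrier_C: "carrier C = (\<Pi>\<^sub>E p\<in>I \<times> I. carrier (B Quot J2 (fst p) (snd p)))"
  by (simp add: cov_C_def)

lemma abelian_group_A: "abelian_group A"
  by (rule abelian_group_PiE[where G = "\<lambda>k. B Quot J k"])
    (auto simp: cov_A_def ideal_J ideal.quotient_is_ring ring.is_abelian_group)

lemma abelian_group_C: "abelian_group C"
  by (rule abelian_group_PiE[where G = "\<lambda>p. B Quot J2 (fst p) (snd p)"])
    (auto simp: cov_C_def ideal_J2 ideal.quotient_is_ring ring.is_abelian_group)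

sublocale A: abelian_group A by (rule abelian_group_A)

sublocale C: abelian_group C by (rule abelian_group_C)

lemma vecA_closed: "(\<And>k. k \<in> I \<Longrightarrow> x k \<in> carrier B) \<Longrightarrow> vecA x \<in> carrier A"
  by (auto simp: carrier_A vecA_def cov_pi_def FactRing_carrier)

lemma matC_closed: "(\<And>i j. i \<in> I \<Longrightarrow> j \<in> I \<Longrightarrow> u i j \<in> carrier B) \<Longrightarrow> matC u \<in> carrier C"
  by (auto simp: carrier_C matC_def cov_pij_def FactRing_carrier)

lemma repA_spec:
  assumes "a \<in> carrier A" "k \<in> I"
  shows "repA k a \<in> carrier B" "a k = J k +> repA k a"
proof -
  have "\<exists>x. x \<in> carrier B \<and> a k = J k +> x"
    using assms by (auto simp: carrier_A FactRing_carrier)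
  then show "repA k a \<in> carrier B" "a k = J k +> repA k a"
    unfolding repA_def by (metis (mono_tags, lifting) someI_ex)+
qed

lemma cov_rep_spec:
  assumes "c \<in> carrier C" "i \<in> I" "j \<in> I"
  shows "cov_rep B J i j c \<in> carrier B" "c (i, j) = J2 i j +> cov_rep B J i j c"
proof -
  have "c (i, j) \<in> carrier (B Quot J2 i j)"
    using PiE_mem[OF assms(1)[unfolded carrier_C], of "(i, j)"] assms by simp
  then have "\<exists>x. x \<in> carrier B \<and> c (i, j) = cov_pij B J i j x"
    by (auto simp: FactRing_carrier cov_pij_def)
  then show "cov_rep B J i j c \<in> carrier B" "c (i, j) = J2 i j +> cov_rep B J i j c"
    unfolding cov_rep_def cov_pij_def[symmetric] by (metis (mono_tags, lifting) someI_ex)+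
qed

lemma vecA_repA: "a \<in> carrier A \<Longrightarrow> vecA (\<lambda>k. repA k a) = a"
  using repA_spec by (auto simp: vecA_def cov_pi_def carrier_A PiE_def extensional_def fun_eq_iff)

lemma matC_cov_rep: "c \<in> carrier C \<Longrightarrow> matC (\<lambda>i j. cov_rep B J i j c) = c"
  using cov_rep_spec
    by (auto simp: matC_def cov_pij_def carrier_C PiE_def extensional_def fun_eq_iff)

lemma vecA_cong: "(\<And>k. k \<in> I \<Longrightarrow> x k = y k) \<Longrightarrow> vecA x = vecA y"
  unfolding vecA_def by (intro restrict_ext) simp

lemma matC_cong: "(\<And>i j. i \<in> I \<Longrightarrow> j \<in> I \<Longrightarrow> u i j = v i j) \<Longrightarrow> matC u = matC v"
  unfolding matC_def by (intro restrict_ext) auto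

lemma vecA_eq_iff:
  assumes "\<And>k. k \<in> I \<Longrightarrow> x k \<in> carrier B" "\<And>k. k \<in> I \<Longrightarrow> y k \<in> carrier B"
  shows "vecA x = vecA y \<longleftrightarrow> (\<forall>k\<in>I. x k \<ominus> y k \<in> J k)"
proof -
  have "vecA x = vecA y \<longleftrightarrow> (\<forall>k\<in>I. J k +> x k = J k +> y k)"
    by (auto simp: vecA_def cov_pi_def restrict_def fun_eq_iff)
  also have "\<dots> \<longleftrightarrow> (\<forall>k\<in>I. x k \<ominus> y k \<in> J k)"
    using assms by (simp add: quotient_eq_iff_same_a_r_cos ideal_J)
  finally show ?thesis .
qed

lemma matC_eq_iff:
  assumes "\<And>i j. i \<in> I \<Longrightarrow> j \<in> I \<Longrightarrow> u i j \<in> carrier B"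
    "\<And>i j. i \<in> I \<Longrightarrow> j \<in> I \<Longrightarrow> v i j \<in> carrier B"
  shows "matC u = matC v \<longleftrightarrow> (\<forall>i\<in>I. \<forall>j\<in>I. u i j \<ominus> v i j \<in> J2 i j)"
proof -
  have "matC u = matC v \<longleftrightarrow> (\<forall>i\<in>I. \<forall>j\<in>I. J2 i j +> u i j = J2 i j +> v i j)"
    by (auto simp: matC_def cov_pij_def restrict_def fun_eq_iff split: if_splits)
  also have "\<dots> \<longleftrightarrow> (\<forall>i\<in>I. \<forall>j\<in>I. u i j \<ominus> v i j \<in> J2 i j)"
    using assms by (simp add: quotient_eq_iff_same_a_r_cos ideal_J2)
  finally show ?thesis .
qed

lemma repA_vecA:
  "(\<And>k. k \<in> I \<Longrightarrow> x k \<in> carrier B) \<Longrightarrow> k \<in> I \<Longrightarrow> repA k (vecA x) \<ominus> x k \<in> J k"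
  using vecA_repA[OF vecA_closed] vecA_eq_iff[of "\<lambda>k. repA k (vecA x)" x] repA_spec vecA_closed
  by metis

lemma cov_rep_matC:
  "(\<And>i j. i \<in> I \<Longrightarrow> j \<in> I \<Longrightarrow> u i j \<in> carrier B) \<Longrightarrow> i \<in> I \<Longrightarrow> j \<in> I \<Longrightarrow>
    cov_rep B J i j (matC u) \<ominus> u i j \<in> J2 i j"
  using matC_cov_rep[OF matC_closed] matC_eq_iff[of "\<lambda>i j. cov_rep B J i j (matC u)" u]
    cov_rep_spec matC_closed
  by metis

lemma vecA_add:
  "(\<And>k. k \<in> I \<Longrightarrow> x k \<in> carrier B) \<Longrightarrow> (\<And>k. k \<in> I \<Longrightarrow> y k \<in> carrier B) \<Longrightarrow>
    vecA x \<oplus>\<^bsub>A\<^esub> vecA y = vecA (\<lambda>k. x k \<oplus> y k)"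
  unfolding vecA_def cov_pi_def
  by (simp add: cov_A_def, intro restrict_ext) (simp add: ideal_J FactRing_add)

lemma vecA_mult:
  "(\<And>k. k \<in> I \<Longrightarrow> x k \<in> carrier B) \<Longrightarrow> (\<And>k. k \<in> I \<Longrightarrow> y k \<in> carrier B) \<Longrightarrow>
    vecA x \<otimes>\<^bsub>A\<^esub> vecA y = vecA (\<lambda>k. x k \<otimes> y k)"
  unfolding vecA_def cov_pi_def
  by (simp add: cov_A_def, intro restrict_ext) (simp add: ideal_J FactRing_mult)

lemma matC_add:
  "(\<And>i j. i \<in> I \<Longrightarrow> j \<in> I \<Longrightarrow> u i j \<in> carrier B) \<Longrightarrow>
   (\<And>i j. i \<in> I \<Longrightarrow> j \<in> I \<Longrightarrow> v i j \<in> carrier B) \<Longrightarrow>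
    matC u \<oplus>\<^bsub>C\<^esub> matC v = matC (\<lambda>i j. u i j \<oplus> v i j)"
  unfolding matC_def cov_pij_def
  by (simp add: cov_C_def, intro restrict_ext) (auto simp: ideal_J2 FactRing_add)

lemma zero_A: "\<zero>\<^bsub>A\<^esub> = vecA (\<lambda>_. \<zero>)"
  unfolding vecA_def cov_pi_def
    by (simp add: cov_A_def, intro restrict_ext) (simp add: ideal_J FactRing_zero)

lemma one_A: "\<one>\<^bsub>A\<^esub> = vecA (\<lambda>_. \<one>)"
  unfolding vecA_def cov_pi_def
    by (simp add: cov_A_def, intro restrict_ext) (simp add: FactRing_one)

lemma zero_C: "\<zero>\<^bsub>C\<^esub> = matC (\<lambda>_ _. \<zero>)"
  unfolding matC_def cov_pij_def
  by (simp add: cov_C_def, intro restrict_ext) (auto simp: ideal_J2 FactRing_zero)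

lemma cov_iota_eq: "cov_iota B J I x = vecA (\<lambda>_. x)"
  by (simp add: cov_iota_def vecA_def)

lemma cov_g_eq: "g = matC (\<lambda>_ _. \<one>)"
  by (simp add: cov_g_def matC_def)

lemma cov_pit_coset: "i \<in> I \<Longrightarrow> j \<in> I \<Longrightarrow> x \<in> carrier B \<Longrightarrow> cov_pit B J i j (J i +> x) = J2 i j +> x"
  unfolding cov_pit_def
    by (rule set_add_a_r_coset_absorb) (auto simp: ideal_J2 ideal_J J_subset_J2_left)

lemma cov_lact_matC:
  assumes "\<And>k. k \<in> I \<Longrightarrow> x k \<in> carrier B" "\<And>i j. i \<in> I \<Longrightarrow> j \<in> I \<Longrightarrow> v i j \<in> carrier B"
  shows "lact (vecA x) (matC v) = matC (\<lambda>i j. x i \<otimes> v i j)"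
  unfolding cov_lact_def matC_def
  by (rule ext) (auto simp: assms vecA_def cov_pi_def cov_pij_def cov_pit_coset FactRing_mult
      ideal_J2)

lemma cov_ract_matC:
  assumes "\<And>k. k \<in> I \<Longrightarrow> x k \<in> carrier B" "\<And>i j. i \<in> I \<Longrightarrow> j \<in> I \<Longrightarrow> v i j \<in> carrier B"
  shows "ract (matC v) (vecA x) = matC (\<lambda>i j. v i j \<otimes> x j)"
  unfolding cov_ract_def matC_def
  by (rule ext) (auto simp: assms vecA_def cov_pi_def cov_pij_def cov_pit_coset J2_comm
      FactRing_mult ideal_J2)

lemma carrier_A_vecA:
  assumes "a \<in> carrier A"
  obtains x where "\<And>k. k \<in> I \<Longrightarrow> x k \<in> carrier B" "a = vecA x"
  using repA_spec[OF assms] vecA_repA[OF assms] by metis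

lemma mult_A_closed: "a \<in> carrier A \<Longrightarrow> a' \<in> carrier A \<Longrightarrow> a \<otimes>\<^bsub>A\<^esub> a' \<in> carrier A"
  by (elim carrier_A_vecA) (simp add: vecA_mult vecA_closed)

lemma finsum_vecA:
  assumes "finite S" "\<And>s k. s \<in> S \<Longrightarrow> k \<in> I \<Longrightarrow> x s k \<in> carrier B"
  shows "(\<Oplus>\<^bsub>A\<^esub>s\<in>S. vecA (x s)) = vecA (\<lambda>k. \<Oplus>s\<in>S. x s k)"
  using assms
proof (induction S rule: finite_induct)
  case empty
  show ?case by (simp add: zero_A)
next
  case (insert t S)
  have "(\<Oplus>\<^bsub>A\<^esub>s\<in>insert t S. vecA (x s)) = vecA (x t) \<oplus>\<^bsub>A\<^esub> vecA (\<lambda>k. \<Oplus>s\<in>S. x s k)"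
    using insert by (simp add: A.finsum_insert vecA_closed)
  also have "\<dots> = vecA (\<lambda>k. \<Oplus>s\<in>insert t S. x s k)"
    using insert by (simp add: vecA_add finsum_insert Pi_iff cong: vecA_cong)
  finally show ?case .
qed

lemma finsum_matC:
  assumes "finite S" "\<And>s i j. s \<in> S \<Longrightarrow> i \<in> I \<Longrightarrow> j \<in> I \<Longrightarrow> u s i j \<in> carrier B"
  shows "(\<Oplus>\<^bsub>C\<^esub>s\<in>S. matC (u s)) = matC (\<lambda>i j. \<Oplus>s\<in>S. u s i j)"
  using assms
proof (induction S rule: finite_induct)
  case empty
  show ?case by (simp add: zero_C)
next
  case (insert t S)
  have "(\<Oplus>\<^bsub>C\<^esub>s\<in>insert t S. matC (u s)) = matC (u t) \<oplus>\<^bsub>C\<^esub> matC (\<lambda>i j. \<Oplus>s\<in>S. u s i j)"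
    using insert by (simp add: C.finsum_insert matC_closed)
  also have "\<dots> = matC (\<lambda>i j. \<Oplus>s\<in>insert t S. u s i j)"
    using insert by (simp add: matC_add finsum_insert Pi_iff cong: matC_cong)
  finally show ?case .
qed

definition unitA :: "'i \<Rightarrow> 'b \<Rightarrow> 'i \<Rightarrow> 'b set" where
  "unitA i x = vecA (\<lambda>k. if k = i then x else \<zero>)"

lemma unitA_closed: "x \<in> carrier B \<Longrightarrow> unitA i x \<in> carrier A"
  unfolding unitA_def by (rule vecA_closed) simp

lemma finsum_unitA:
  assumes "\<And>k. k \<in> I \<Longrightarrow> x k \<in> carrier B"
  shows "(\<Oplus>\<^bsub>A\<^esub>i\<in>I. unitA i (x i)) = vecA x"
  unfolding unitA_def using assms finite_I
  by (simp add: finsum_vecA finsum_singleton Pi_iff cong: vecA_cong)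

lemma unitA_eq_zero: "i \<in> I \<Longrightarrow> u \<in> J i \<Longrightarrow> unitA i u = \<zero>\<^bsub>A\<^esub>"
  unfolding unitA_def zero_A using J_subset_carrier[of i]
  by (subst vecA_eq_iff) (auto simp: a_minus_def ideal_J ideal.axioms(1)
      additive_subgroup.zero_closed)

lemma unitA_zero: "unitA i \<zero> = \<zero>\<^bsub>A\<^esub>"
  unfolding unitA_def zero_A by (rule vecA_cong) simp

lemma unitA_add: "x \<in> carrier B \<Longrightarrow> y \<in> carrier B \<Longrightarrow> unitA i x \<oplus>\<^bsub>A\<^esub> unitA i y = unitA i (x \<oplus> y)"
  unfolding unitA_def by (subst vecA_add) (auto intro!: vecA_cong)

lemma unitA_mult_const:
  "x \<in> carrier B \<Longrightarrow> y \<in> carrier B \<Longrightarrow> unitA i x \<otimes>\<^bsub>A\<^esub> vecA (\<lambda>_. y) = unitA i (x \<otimes> y)"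
  unfolding unitA_def by (subst vecA_mult) (auto intro!: vecA_cong)

lemma const_mult_unitA:
  "x \<in> carrier B \<Longrightarrow> y \<in> carrier B \<Longrightarrow> vecA (\<lambda>_. y) \<otimes>\<^bsub>A\<^esub> unitA i x = unitA i (y \<otimes> x)"
  unfolding unitA_def by (subst vecA_mult) (auto intro!: vecA_cong)

end

section \<open>The canonical map is bijective\<close>

context ideal_family
begin

abbreviation "Bco \<equiv> coinvariants A lact ract g"

interpretation TA: tensor_relation Bco "carrier A" "add A" "monoid.mult A" "carrier A" "add A"
  "monoid.mult A" .

lemma lact_vecA_g: "(\<And>k. k \<in> I \<Longrightarrow> x k \<in> carrier B) \<Longrightarrow> lact (vecA x) g = matC (\<lambda>i j. x i)"
  unfolding cov_g_eq by (subst cov_lact_matC) (auto intro!: matC_cong)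

lemma ract_g_vecA: "(\<And>k. k \<in> I \<Longrightarrow> x k \<in> carrier B) \<Longrightarrow> ract g (vecA x) = matC (\<lambda>i j. x j)"
  unfolding cov_g_eq by (subst cov_ract_matC) (auto intro!: matC_cong)

lemma vecA_coinvariant_iff:
  "(\<And>k. k \<in> I \<Longrightarrow> x k \<in> carrier B) \<Longrightarrow> vecA x \<in> Bco \<longleftrightarrow> (\<forall>i\<in>I. \<forall>j\<in>I. x i \<ominus> x j \<in> J2 i j)"
  by (simp add: coinvariants_def vecA_closed lact_vecA_g ract_g_vecA matC_eq_iff)

lemma const_coinvariant: "x \<in> carrier B \<Longrightarrow> vecA (\<lambda>_. x) \<in> Bco"
  by (simp add: vecA_coinvariant_iff a_minus_def r_neg ideal_J2 additive_subgroup.zero_closed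
      ideal.axioms(1))

lemma coinvariants_subset: "Bco \<subseteq> carrier A"
  by (auto simp: coinvariants_def)

definition can_elem :: "('i \<Rightarrow> 'b set) \<times> ('i \<Rightarrow> 'b set) \<Rightarrow> 'i \<times> 'i \<Rightarrow> 'b set" where
  "can_elem p = lact (fst p) (ract g (snd p))"

lemma can_map_eq_fs_lift: "can_map C lact ract g f = fs_lift C can_elem f"
  by (simp add: can_map_def fs_lift_def can_elem_def)

lemma can_elem_vecA:
  "(\<And>k. k \<in> I \<Longrightarrow> x k \<in> carrier B) \<Longrightarrow> (\<And>k. k \<in> I \<Longrightarrow> y k \<in> carrier B) \<Longrightarrow>
    can_elem (vecA x, vecA y) = matC (\<lambda>i j. x i \<otimes> y j)"
  by (simp add: can_elem_def ract_g_vecA cov_lact_matC)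

lemma can_elem_closed: "can_elem \<in> carrier A \<times> carrier A \<rightarrow> carrier C"
  by (auto elim!: carrier_A_vecA simp: can_elem_vecA intro!: matC_closed)

lemma can_elem_add_left:
  assumes "a \<in> carrier A" "a' \<in> carrier A" "a'' \<in> carrier A"
  shows "can_elem (a \<oplus>\<^bsub>A\<^esub> a', a'') = can_elem (a, a'') \<oplus>\<^bsub>C\<^esub> can_elem (a', a'')"
  using assms
  by (elim carrier_A_vecA)
    (simp add: vecA_add can_elem_vecA matC_add l_distr vecA_closed cong: matC_cong)

lemma can_elem_add_right:
  assumes "a \<in> carrier A" "a' \<in> carrier A" "a'' \<in> carrier A"
  shows "can_elem (a, a' \<oplus>\<^bsub>A\<^esub> a'') = can_elem (a, a') \<oplus>\<^bsub>C\<^esub> can_elem (a, a'')"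
  using assms
  by (elim carrier_A_vecA)
    (simp add: vecA_add can_elem_vecA matC_add r_distr vecA_closed cong: matC_cong)

lemma can_elem_balanced:
  assumes "a \<in> carrier A" "r \<in> Bco" "a' \<in> carrier A"
  shows "can_elem (a \<otimes>\<^bsub>A\<^esub> r, a') = can_elem (a, r \<otimes>\<^bsub>A\<^esub> a')"
proof -
  obtain x y z where x: "\<And>k. k \<in> I \<Longrightarrow> x k \<in> carrier B" and y: "\<And>k. k \<in> I \<Longrightarrow> y k \<in> carrier B"
    and z: "\<And>k. k \<in> I \<Longrightarrow> z k \<in> carrier B" and eqs: "a = vecA x" "r = vecA y" "a' = vecA z"
    using assms by (auto simp: coinvariants_def elim!: carrier_A_vecA)
  have y_comp: "y i \<ominus> y j \<in> J2 i j" if "i \<in> I" "j \<in> I" for i j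
    using assms(2) that by (simp add: eqs vecA_coinvariant_iff y)
  have "matC (\<lambda>i j. x i \<otimes> y i \<otimes> z j) = matC (\<lambda>i j. x i \<otimes> (y j \<otimes> z j))"
  proof (subst matC_eq_iff, safe)
    fix i j assume ij: "i \<in> I" "j \<in> I"
    have "x i \<otimes> y i \<otimes> z j \<ominus> x i \<otimes> (y j \<otimes> z j) = x i \<otimes> (y i \<ominus> y j) \<otimes> z j"
      using x y z ij by algebra
    also have "\<dots> \<in> J2 i j"
      using y_comp[OF ij] x y z ij ideal_J2[OF ij] by (simp add: ideal.I_l_closed ideal.I_r_closed)
    finally show "x i \<otimes> y i \<otimes> z j \<ominus> x i \<otimes> (y j \<otimes> z j) \<in> J2 i j" .
  qed (use x y z in auto)
  then show ?thesis by (simp add: eqs vecA_mult can_elem_vecA x y z)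
qed

lemma can_map_Rel: "f \<in> TA.Rel \<Longrightarrow> can_map C lact ract g f = \<zero>\<^bsub>C\<^esub>"
proof -
  assume f: "f \<in> TA.Rel"
  show ?thesis unfolding can_map_eq_fs_lift
    by (rule C.fs_lift_tens_rel[OF f _ _ _ _ can_elem_closed])
      (use coinvariants_subset in
        \<open>auto intro: mult_A_closed simp: can_elem_add_left can_elem_add_right can_elem_balanced\<close>)
qed

lemma Rel_zero_A_left: "a \<in> carrier A \<Longrightarrow> fs_single (\<zero>\<^bsub>A\<^esub>, a) \<in> TA.Rel"
  by (intro TA.Rel_zero_left) auto

lemma Rel_zero_A_right: "a \<in> carrier A \<Longrightarrow> fs_single (a, \<zero>\<^bsub>A\<^esub>) \<in> TA.Rel"
  by (intro TA.Rel_zero_right) auto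

lemma tens_eq_unitA_balanced:
  assumes "x \<in> carrier B" "y \<in> carrier B"
  shows "TA.tens_eq (fs_single (unitA i x, unitA j y)) (fs_single (unitA i \<one>, unitA j (x \<otimes> y)))"
proof -
  have "TA.tens_eq (fs_single (unitA i \<one> \<otimes>\<^bsub>A\<^esub> vecA (\<lambda>_. x), unitA j y))
      (fs_single (unitA i \<one>, vecA (\<lambda>_. x) \<otimes>\<^bsub>A\<^esub> unitA j y))"
    using assms by (intro TA.tens_eq_bal unitA_closed const_coinvariant) auto
  then show ?thesis using assms by (simp add: unitA_mult_const const_mult_unitA)
qed

lemma Rel_unitA_J:
  assumes "i \<in> I" "u \<in> J i"
  shows "fs_single (unitA i \<one>, unitA j u) \<in> TA.Rel"
proof -
  have "u \<in> carrier B" using assms J_subset_carrier by blast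
  then have "TA.tens_eq (fs_single (unitA i \<one> \<otimes>\<^bsub>A\<^esub> vecA (\<lambda>_. u), unitA j \<one>))
      (fs_single (unitA i \<one>, vecA (\<lambda>_. u) \<otimes>\<^bsub>A\<^esub> unitA j \<one>))"
    by (intro TA.tens_eq_bal unitA_closed const_coinvariant) auto
  then have "TA.tens_eq (fs_single (\<zero>\<^bsub>A\<^esub>, unitA j \<one>)) (fs_single (unitA i \<one>, unitA j u))"
    using \<open>u \<in> carrier B\<close> assms by (simp add: unitA_mult_const const_mult_unitA unitA_eq_zero)
  then show ?thesis
    using TA.tens_eq_Rel[OF TA.tens_eq_sym] Rel_zero_A_left[OF unitA_closed[OF one_closed]] by blast
qed

lemma tens_eq_unitA_J2:
  assumes ij: "i \<in> I" "j \<in> I" and z: "z \<in> carrier B" "z' \<in> carrier B" and d: "z \<ominus> z' \<in> J2 i j"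
  shows "TA.tens_eq (fs_single (unitA i \<one>, unitA j z)) (fs_single (unitA i \<one>, unitA j z'))"
proof -
  obtain u v where u: "u \<in> J i" and v: "v \<in> J j" and uv: "z \<ominus> z' = u \<oplus> v"
    using d by (auto simp: set_add_def')
  have uv_carr: "u \<in> carrier B" "v \<in> carrier B" using u v ij J_subset_carrier by blast+
  have "z \<ominus> (z' \<oplus> u) = v"
  proof -
    have "z = (z \<ominus> z') \<oplus> z'" using z by algebra
    then show ?thesis using z uv_carr by (simp add: uv) algebra
  qed
  then have "unitA j z = unitA j (z' \<oplus> u)"
    unfolding unitA_def using z uv_carr v
    by (subst vecA_eq_iff) (auto simp: a_minus_def r_neg ideal_J ideal.axioms(1)
        additive_subgroup.zero_closed)
  also have "\<dots> = unitA j z' \<oplus>\<^bsub>A\<^esub> unitA j u" using z uv_carr by (simp add: unitA_add)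
  finally have "TA.tens_eq (fs_single (unitA i \<one>, unitA j z))
      (\<lambda>p. fs_single (unitA i \<one>, unitA j z') p + fs_single (unitA i \<one>, unitA j u) p)"
    using z uv_carr by (simp add: TA.tens_eq_addr unitA_closed)
  also have "TA.tens_eq \<dots> (fs_single (unitA i \<one>, unitA j z'))"
    by (rule TA.tens_eq_add_Rel[OF Rel_unitA_J[OF ij(1) u]])
  finally show ?thesis .
qed

definition nf :: "('i \<Rightarrow> 'i \<Rightarrow> 'b) \<Rightarrow> ('i \<Rightarrow> 'b set) \<times> ('i \<Rightarrow> 'b set) \<Rightarrow> int" where
  "nf u = (\<lambda>q. \<Sum>(i, j)\<in>I \<times> I. fs_single (unitA i \<one>, unitA j (u i j)) q)"

definition normal_form :: "('i \<times> 'i \<Rightarrow> 'b set) \<Rightarrow> ('i \<Rightarrow> 'b set) \<times> ('i \<Rightarrow> 'b set) \<Rightarrow> int" where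
  "normal_form c = nf (\<lambda>i j. cov_rep B J i j c)"

lemma nf_fsums:
  "(\<And>i j. i \<in> I \<Longrightarrow> j \<in> I \<Longrightarrow> u i j \<in> carrier B) \<Longrightarrow> nf u \<in> fsums (carrier A \<times> carrier A)"
  unfolding nf_def using finite_I by (intro fsums_sum) (auto intro!: fsums_single unitA_closed)

lemma nf_cong:
  assumes "\<And>i j. i \<in> I \<Longrightarrow> j \<in> I \<Longrightarrow> u i j \<in> carrier B"
    "\<And>i j. i \<in> I \<Longrightarrow> j \<in> I \<Longrightarrow> v i j \<in> carrier B"
    "\<And>i j. i \<in> I \<Longrightarrow> j \<in> I \<Longrightarrow> u i j \<ominus> v i j \<in> J2 i j"
  shows "TA.tens_eq (nf u) (nf v)"
  unfolding nf_def using finite_I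
  by (intro TA.tens_eq_sum) (auto simp: assms tens_eq_unitA_J2)

lemma nf_add:
  assumes "\<And>i j. i \<in> I \<Longrightarrow> j \<in> I \<Longrightarrow> u i j \<in> carrier B"
    "\<And>i j. i \<in> I \<Longrightarrow> j \<in> I \<Longrightarrow> v i j \<in> carrier B"
  shows "TA.tens_eq (nf (\<lambda>i j. u i j \<oplus> v i j)) (\<lambda>q. nf u q + nf v q)"
proof -
  have "TA.tens_eq (nf (\<lambda>i j. u i j \<oplus> v i j))
      (\<lambda>q. \<Sum>(i, j)\<in>I \<times> I. fs_single (unitA i \<one>, unitA j (u i j)) q
        + fs_single (unitA i \<one>, unitA j (v i j)) q)"
    unfolding nf_def using finite_I
    by (intro TA.tens_eq_sum) (auto simp: assms simp flip: unitA_add intro!: TA.tens_eq_addr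
        unitA_closed)
  then show ?thesis unfolding nf_def by (simp add: sum.distrib split_beta)
qed

lemma normal_form_matC:
  "(\<And>i j. i \<in> I \<Longrightarrow> j \<in> I \<Longrightarrow> u i j \<in> carrier B) \<Longrightarrow> TA.tens_eq (normal_form (matC u)) (nf u)"
  unfolding normal_form_def
  by (rule nf_cong) (auto simp: cov_rep_matC cov_rep_spec matC_closed)

lemma normal_form_add:
  assumes "c \<in> carrier C" "d \<in> carrier C"
  shows "TA.tens_eq (normal_form (c \<oplus>\<^bsub>C\<^esub> d)) (\<lambda>q. normal_form c q + normal_form d q)"
proof -
  have reps: "\<And>i j. i \<in> I \<Longrightarrow> j \<in> I \<Longrightarrow> cov_rep B J i j c \<in> carrier B"
      "\<And>i j. i \<in> I \<Longrightarrow> j \<in> I \<Longrightarrow> cov_rep B J i j d \<in> carrier B"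
    using assms cov_rep_spec by auto
  have "c \<oplus>\<^bsub>C\<^esub> d = matC (\<lambda>i j. cov_rep B J i j c \<oplus> cov_rep B J i j d)"
    using matC_add[of "\<lambda>i j. cov_rep B J i j c" "\<lambda>i j. cov_rep B J i j d"] reps assms
    by (simp add: matC_cov_rep)
  then have "TA.tens_eq (normal_form (c \<oplus>\<^bsub>C\<^esub> d)) (nf (\<lambda>i j. cov_rep B J i j c \<oplus> cov_rep B J i j d))"
    using reps by (simp add: normal_form_matC)
  also have "TA.tens_eq \<dots> (\<lambda>q. normal_form c q + normal_form d q)"
    unfolding normal_form_def using reps by (rule nf_add)
  finally show ?thesis .
qed

lemma normal_form_zero: "normal_form \<zero>\<^bsub>C\<^esub> \<in> TA.Rel"
proof -
  have "TA.tens_eq (normal_form \<zero>\<^bsub>C\<^esub>) (nf (\<lambda>_ _. \<zero>))"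
    unfolding zero_C by (rule normal_form_matC) simp
  moreover have "nf (\<lambda>_ _. \<zero>) \<in> TA.Rel"
    unfolding nf_def using finite_I
    by (intro TA.Rel_sum) (auto simp: unitA_zero intro!: Rel_zero_A_right unitA_closed)
  ultimately show ?thesis by (rule TA.tens_eq_Rel)
qed

lemma normal_form_neg:
  assumes "c \<in> carrier C"
  shows "TA.tens_eq (normal_form (\<ominus>\<^bsub>C\<^esub> c)) (\<lambda>q. - normal_form c q)"
proof -
  have "TA.tens_eq (\<lambda>q. normal_form (\<ominus>\<^bsub>C\<^esub> c) q + normal_form c q) (normal_form \<zero>\<^bsub>C\<^esub>)"
    using TA.tens_eq_sym[OF normal_form_add[of "\<ominus>\<^bsub>C\<^esub> c" c]] assms by (simp add: C.l_neg)
  also have "TA.tens_eq \<dots> (\<lambda>_. 0)"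
    using normal_form_zero by (simp add: TA.tens_eq_zero_iff)
  finally have "TA.tens_eq (\<lambda>q. (normal_form (\<ominus>\<^bsub>C\<^esub> c) q + normal_form c q) + - normal_form c q)
      (\<lambda>q. 0 + - normal_form c q)"
    by (rule TA.tens_eq_add[OF _ TA.tens_eq_refl])
  then show ?thesis by simp
qed

lemma tens_eq_single_normal_form:
  assumes "a \<in> carrier A" "a' \<in> carrier A"
  shows "TA.tens_eq (fs_single (a, a')) (normal_form (can_elem (a, a')))"
proof -
  obtain x y where x: "\<And>k. k \<in> I \<Longrightarrow> x k \<in> carrier B" and y: "\<And>k. k \<in> I \<Longrightarrow> y k \<in> carrier B"
    and a: "a = vecA x" "a' = vecA y"
    using assms by (metis carrier_A_vecA)
  have "TA.tens_eq (fs_single (\<Oplus>\<^bsub>A\<^esub>i\<in>I. unitA i (x i), a'))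
      (\<lambda>q. \<Sum>i\<in>I. fs_single (unitA i (x i), a') q)"
    using x assms(2)
      by (intro TA.tens_eq_finsum_left A.abelian_monoid_axioms finite_I) (auto intro: unitA_closed)
  also have "TA.tens_eq \<dots> (\<lambda>q. \<Sum>i\<in>I. \<Sum>j\<in>I. fs_single (unitA i (x i), unitA j (y j)) q)"
  proof (rule TA.tens_eq_sum[OF finite_I])
    fix i assume "i \<in> I"
    have "TA.tens_eq (fs_single (unitA i (x i), \<Oplus>\<^bsub>A\<^esub>j\<in>I. unitA j (y j)))
        (\<lambda>q. \<Sum>j\<in>I. fs_single (unitA i (x i), unitA j (y j)) q)"
      using x y \<open>i \<in> I\<close>
      by (intro TA.tens_eq_finsum_right A.abelian_monoid_axioms finite_I) (auto intro: unitA_closed)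
    then show "TA.tens_eq (fs_single (unitA i (x i), a'))
        (\<lambda>q. \<Sum>j\<in>I. fs_single (unitA i (x i), unitA j (y j)) q)"
      by (simp add: a(2) finsum_unitA y)
  qed
  also have "TA.tens_eq \<dots> (\<lambda>q. \<Sum>i\<in>I. \<Sum>j\<in>I. fs_single (unitA i \<one>, unitA j (x i \<otimes> y j)) q)"
    using x y by (intro TA.tens_eq_sum finite_I tens_eq_unitA_balanced) auto
  also have "(\<lambda>q. \<Sum>i\<in>I. \<Sum>j\<in>I. fs_single (unitA i \<one>, unitA j (x i \<otimes> y j)) q) = nf (\<lambda>i j. x i \<otimes> y j)"
    unfolding nf_def by (simp add: sum.cartesian_product)
  also have "TA.tens_eq \<dots> (normal_form (can_elem (a, a')))"
    using TA.tens_eq_sym[OF normal_form_matC[of "\<lambda>i j. x i \<otimes> y j"]] x y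
    by (simp add: a can_elem_vecA)
  finally show ?thesis by (simp add: a(1) finsum_unitA x)
qed

lemma tens_eq_normal_form_can_map:
  assumes "f \<in> fsums (carrier A \<times> carrier A)"
  shows "TA.tens_eq f (normal_form (can_map C lact ract g f))"
  unfolding can_map_eq_fs_lift using assms
proof (induction rule: fsums_induct)
  case zero
  have "TA.tens_eq (normal_form \<zero>\<^bsub>C\<^esub>) (\<lambda>_. 0)"
    using normal_form_zero by (simp only: TA.tens_eq_zero_iff)
  then show ?case using TA.tens_eq_sym by simp
next
  case (single p)
  then show ?case
    using tens_eq_single_normal_form[of "fst p" "snd p"] C.fs_lift_single[OF _ can_elem_closed]
    by (auto simp: mem_Times_iff)
next
  case (add f h)
  have closed: "fs_lift C can_elem f \<in> carrier C" "fs_lift C can_elem h \<in> carrier C"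
    using add(1,2) C.fs_lift_closed[OF _ can_elem_closed] by blast+
  have "TA.tens_eq (\<lambda>q. f q + h q)
      (\<lambda>q. normal_form (fs_lift C can_elem f) q + normal_form (fs_lift C can_elem h) q)"
    using add(3,4) by (rule TA.tens_eq_add)
  also have "TA.tens_eq \<dots> (normal_form (fs_lift C can_elem f \<oplus>\<^bsub>C\<^esub> fs_lift C can_elem h))"
    by (rule TA.tens_eq_sym[OF normal_form_add[OF closed]])
  finally show ?case using C.fs_lift_add[OF add(1,2) can_elem_closed] by simp
next
  case (neg f)
  have "TA.tens_eq (\<lambda>q. - f q) (\<lambda>q. - normal_form (fs_lift C can_elem f) q)"
    using neg(2) by (rule TA.tens_eq_neg)
  also have "TA.tens_eq \<dots> (normal_form (\<ominus>\<^bsub>C\<^esub> fs_lift C can_elem f))"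
    by (rule TA.tens_eq_sym[OF normal_form_neg[OF C.fs_lift_closed[OF neg(1) can_elem_closed]]])
  finally show ?case using C.fs_lift_neg[OF neg(1) can_elem_closed] by simp
qed

lemma can_map_normal_form:
  assumes c: "c \<in> carrier C"
  shows "can_map C lact ract g (normal_form c) = c"
proof -
  define r where "r = (\<lambda>p. cov_rep B J (fst p) (snd p) c)"
  have r: "p \<in> I \<times> I \<Longrightarrow> r p \<in> carrier B" for p using cov_rep_spec(1)[OF c] by (auto simp: r_def)
  have "normal_form c = (\<lambda>q. \<Sum>p\<in>I \<times> I. fs_single (unitA (fst p) \<one>, unitA (snd p) (r p)) q)"
    by (simp add: normal_form_def nf_def r_def split_beta)
  then have "can_map C lact ract g (normal_form c)
      = (\<Oplus>\<^bsub>C\<^esub>p\<in>I \<times> I. can_elem (unitA (fst p) \<one>, unitA (snd p) (r p)))"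
    unfolding can_map_eq_fs_lift using finite_I r
    by (simp add: C.fs_lift_sum_single[OF _ _ can_elem_closed] unitA_closed)
  also have "\<dots> = (\<Oplus>\<^bsub>C\<^esub>p\<in>I \<times> I. matC (\<lambda>k l. if (k, l) = p then r p else \<zero>))"
    using r
      by (intro C.finsum_cong') (auto simp: unitA_def can_elem_vecA intro!: matC_cong matC_closed)
  also have "\<dots> = matC (\<lambda>k l. \<Oplus>p\<in>I \<times> I. if (k, l) = p then r p else \<zero>)"
    using r finite_I by (intro finsum_matC) auto
  also have "\<dots> = matC (\<lambda>k l. r (k, l))"
    using r finite_I by (intro matC_cong finsum_singleton) auto
  also have "\<dots> = c" using matC_cov_rep[OF c] by (simp add: r_def)
  finally show ?thesis .
qed

section \<open>The element \<open>g\<close> is grouplike\<close>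

interpretation TC: tensor_relation "carrier A" "carrier C" "add C" ract "carrier C" "add C" lact .

definition colC :: "'i \<Rightarrow> 'i \<times> 'i \<Rightarrow> 'b set" where
  "colC k = matC (\<lambda>i j. if j = k then \<one> else \<zero>)"

definition rowC :: "'i \<Rightarrow> 'i \<times> 'i \<Rightarrow> 'b set" where
  "rowC k = matC (\<lambda>i j. if i = k then \<one> else \<zero>)"

lemma cov_Delta_g:
  "cov_Delta B J I g = (\<lambda>q. \<Sum>k\<in>I. fs_single (matC (\<lambda>i j. cov_rep B J i k g), colC k) q)"
  unfolding cov_Delta_def colC_def matC_def by (simp add: eq_commute)

lemma finsum_colC: "(\<Oplus>\<^bsub>C\<^esub>k\<in>I. colC k) = g"
  unfolding colC_def cov_g_eq using finite_I
  by (simp add: finsum_matC finsum_singleton Pi_iff cong: matC_cong)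

lemma cov_rep_g: "i \<in> I \<Longrightarrow> j \<in> I \<Longrightarrow> cov_rep B J i j g \<ominus> \<one> \<in> J2 i j"
  using cov_rep_matC[of "\<lambda>_ _. \<one>"] by (simp add: cov_g_eq)

text \<open>Row \<open>i\<close> of the matrix is \<open>rowC i \<iota>(v\<^sub>i)\<close>, and \<open>\<iota>(v\<^sub>i) colC k = 0\<close> because \<open>v\<^sub>i \<in> J\<^sub>k\<close>.\<close>
lemma Rel_row_const_colC:
  assumes k: "k \<in> I" and v: "\<And>i. i \<in> I \<Longrightarrow> v i \<in> J k"
  shows "fs_single (matC (\<lambda>i j. v i), colC k) \<in> TC.Rel"
proof -
  have v_carr: "v i \<in> carrier B" if "i \<in> I" for i using v[OF that] J_subset_carrier[OF k] by blast
  have "(\<Oplus>\<^bsub>C\<^esub>i\<in>I. ract (rowC i) (vecA (\<lambda>_. v i)))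
      = (\<Oplus>\<^bsub>C\<^esub>i\<in>I. matC (\<lambda>i' j. if i = i' then v i else \<zero>))"
    using v_carr
      by (intro C.finsum_cong') (auto simp: rowC_def cov_ract_matC intro!: matC_cong matC_closed)
  also have "\<dots> = matC (\<lambda>i j. v i)"
    using finite_I v_carr
    by (simp add: finsum_matC) (intro matC_cong add.finprod_singleton_swap, auto)
  finally have "matC (\<lambda>i j. v i) = (\<Oplus>\<^bsub>C\<^esub>i\<in>I. ract (rowC i) (vecA (\<lambda>_. v i)))" ..
  moreover have "TC.tens_eq (fs_single (\<Oplus>\<^bsub>C\<^esub>i\<in>I. ract (rowC i) (vecA (\<lambda>_. v i)), colC k))
      (\<lambda>q. \<Sum>i\<in>I. fs_single (ract (rowC i) (vecA (\<lambda>_. v i)), colC k) q)"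
    using finite_I v_carr
    by (intro TC.tens_eq_finsum_left C.abelian_monoid_axioms)
      (auto simp: rowC_def colC_def cov_ract_matC intro!: matC_closed)
  moreover have "(\<lambda>q. \<Sum>i\<in>I. fs_single (ract (rowC i) (vecA (\<lambda>_. v i)), colC k) q) \<in> TC.Rel"
  proof (intro TC.Rel_sum[OF finite_I])
    fix i assume i: "i \<in> I"
    have "lact (vecA (\<lambda>_. v i)) (colC k) = \<zero>\<^bsub>C\<^esub>"
      unfolding colC_def zero_C using v_carr[OF i] v[OF i] J_subset_J2_right k
      by (subst cov_lact_matC, simp_all, subst matC_eq_iff)
        (auto simp: a_minus_def ideal_J2 ideal.axioms(1) additive_subgroup.zero_closed)
    then have "TC.tens_eq (fs_single (ract (rowC i) (vecA (\<lambda>_. v i)), colC k))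
        (fs_single (rowC i, \<zero>\<^bsub>C\<^esub>))"
      using TC.tens_eq_bal[of "rowC i" "vecA (\<lambda>_. v i)" "colC k"] v_carr[OF i]
      by (simp add: rowC_def colC_def vecA_closed matC_closed)
    moreover have "fs_single (rowC i, \<zero>\<^bsub>C\<^esub>) \<in> TC.Rel"
      by (intro TC.Rel_zero_right) (auto simp: rowC_def intro!: matC_closed)
    ultimately show "fs_single (ract (rowC i) (vecA (\<lambda>_. v i)), colC k) \<in> TC.Rel"
      by (rule TC.tens_eq_Rel)
  qed
  ultimately show ?thesis using TC.tens_eq_Rel by simp
qed

text \<open>Write \<open>cov_rep i k g - 1 = u\<^sub>i + v\<^sub>i\<close> with \<open>u\<^sub>i \<in> J\<^sub>i\<close> and \<open>v\<^sub>i \<in> J\<^sub>k\<close>;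
  the \<open>u\<^sub>i\<close> vanish in every \<open>B\<^sub>i\<^sub>l\<close>.\<close>
lemma cov_rep_g_column:
  assumes k: "k \<in> I"
  obtains v where "\<And>i. i \<in> I \<Longrightarrow> v i \<in> J k"
    and "matC (\<lambda>i j. cov_rep B J i k g) = g \<oplus>\<^bsub>C\<^esub> matC (\<lambda>i j. v i)"
proof -
  have "\<forall>i\<in>I. \<exists>v\<in>J k. \<exists>u\<in>J i. cov_rep B J i k g \<ominus> \<one> = u \<oplus> v"
    using cov_rep_g k by (fastforce simp: set_add_def')
  then obtain v where v: "\<And>i. i \<in> I \<Longrightarrow> v i \<in> J k \<and> (\<exists>u\<in>J i. cov_rep B J i k g \<ominus> \<one> = u \<oplus> v i)"
    by metis
  have v_carr: "v i \<in> carrier B" if "i \<in> I" for i using v[OF that] J_subset_carrier[OF k] by blast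
  have "matC (\<lambda>i j. cov_rep B J i k g) = matC (\<lambda>i j. \<one> \<oplus> v i)"
  proof (subst matC_eq_iff, safe)
    fix i j assume ij: "i \<in> I" "j \<in> I"
    obtain u where u: "u \<in> J i" "cov_rep B J i k g \<ominus> \<one> = u \<oplus> v i" using v[OF ij(1)] by blast
    have carr: "cov_rep B J i k g \<in> carrier B" "u \<in> carrier B"
      using cov_rep_spec(1)[OF _ ij(1) k] matC_closed[of "\<lambda>_ _. \<one>"] u J_subset_carrier[OF ij(1)]
      by (auto simp: cov_g_eq)
    have "cov_rep B J i k g \<ominus> (\<one> \<oplus> v i) = (cov_rep B J i k g \<ominus> \<one>) \<ominus> v i"
      using carr v_carr[OF ij(1)] by algebra
    also have "\<dots> = u" using u(2) carr v_carr[OF ij(1)] by (simp add: a_minus_def a_assoc r_neg)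
    finally show "cov_rep B J i k g \<ominus> (\<one> \<oplus> v i) \<in> J2 i j" using u(1) J_subset_J2_left[OF ij] by auto
  qed (use cov_rep_spec(1)[OF _ _ k] matC_closed[of "\<lambda>_ _. \<one>"] v_carr in \<open>auto simp: cov_g_eq\<close>)
  also have "\<dots> = g \<oplus>\<^bsub>C\<^esub> matC (\<lambda>i j. v i)"
    unfolding cov_g_eq using v_carr by (subst matC_add) auto
  finally show ?thesis using that v by blast
qed

lemma g_closed: "g \<in> carrier C"
  unfolding cov_g_eq by (rule matC_closed) simp

lemma colC_closed: "colC k \<in> carrier C"
  unfolding colC_def by (rule matC_closed) simp

lemma tens_eq_column_colC:
  assumes k: "k \<in> I"
  shows "TC.tens_eq (fs_single (matC (\<lambda>i j. cov_rep B J i k g), colC k)) (fs_single (g, colC k))"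
proof -
  obtain v where v: "\<And>i. i \<in> I \<Longrightarrow> v i \<in> J k"
    and eq: "matC (\<lambda>i j. cov_rep B J i k g) = g \<oplus>\<^bsub>C\<^esub> matC (\<lambda>i j. v i)"
    using cov_rep_g_column[OF k] by blast
  have "matC (\<lambda>i j. v i) \<in> carrier C"
    using v J_subset_carrier[OF k] by (intro matC_closed) blast
  then have "TC.tens_eq (fs_single (matC (\<lambda>i j. cov_rep B J i k g), colC k))
      (\<lambda>q. fs_single (g, colC k) q + fs_single (matC (\<lambda>i j. v i), colC k) q)"
    unfolding eq by (intro TC.tens_eq_addl g_closed colC_closed)
  also have "TC.tens_eq \<dots> (fs_single (g, colC k))"
    by (rule TC.tens_eq_add_Rel[OF Rel_row_const_colC[OF k v]])
  finally show ?thesis .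
qed

lemma cov_eps_g: "cov_eps B J I g = \<one>\<^bsub>A\<^esub>"
proof -
  have "cov_eps B J I g = vecA (\<lambda>i. cov_rep B J i i g)"
    by (simp add: cov_eps_def vecA_def)
  also have "\<dots> = vecA (\<lambda>_. \<one>)"
    using cov_rep_g J2_self cov_rep_spec(1)[OF g_closed] by (subst vecA_eq_iff) auto
  finally show ?thesis by (simp add: one_A)
qed

lemma grouplike_g: "grouplike A C lact ract (cov_Delta B J I) (cov_eps B J I) g"
proof -
  have "TC.tens_eq (cov_Delta B J I g) (\<lambda>q. \<Sum>k\<in>I. fs_single (g, colC k) q)"
    unfolding cov_Delta_g using finite_I tens_eq_column_colC by (rule TC.tens_eq_sum)
  also have "TC.tens_eq \<dots> (fs_single (g, g))"
    using TC.tens_eq_finsum_right[OF C.abelian_monoid_axioms refl refl finite_I _ g_closed, of colC]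
    by (simp add: finsum_colC colC_closed TC.tens_eq_sym)
  finally show ?thesis unfolding grouplike_def TC.tens_eq_def using g_closed
    by (simp add: cov_eps_g)
qed

theorem galois_coring_cov: "galois_coring A C lact ract (cov_Delta B J I) (cov_eps B J I) g"
  unfolding galois_coring_def
proof (intro conjI ballI grouplike_g)
  fix f assume "f \<in> fsums (carrier A \<times> carrier A)"
  then show "can_map C lact ract g f = \<zero>\<^bsub>C\<^esub> \<longleftrightarrow> f \<in> TA.Rel"
    using can_map_Rel tens_eq_normal_form_can_map normal_form_zero TA.tens_eq_Rel by metis
next
  fix c assume "c \<in> carrier C"
  then show "\<exists>f\<in>fsums (carrier A \<times> carrier A). can_map C lact ract g f = c"
    using can_map_normal_form nf_fsums cov_rep_spec normal_form_def by metis
qed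

end

section \<open>Flatness forces completeness\<close>

text \<open>The flatness hypotheses quantify over modules whose carrier lives in the type
  \<open>'b \<times> nat\<close>; an ideal \<open>L\<close> of \<open>B\<close> is encoded there as the module \<open>L \<times> {0}\<close>.\<close>

definition pair_add :: "('b, 'c) ring_scheme \<Rightarrow> 'b \<times> nat \<Rightarrow> 'b \<times> nat \<Rightarrow> 'b \<times> nat" where
  "pair_add R p q = (fst p \<oplus>\<^bsub>R\<^esub> fst q, 0)"

definition pair_lmult :: "('b, 'c) ring_scheme \<Rightarrow> 'b \<Rightarrow> 'b \<times> nat \<Rightarrow> 'b \<times> nat" where
  "pair_lmult R b p = (b \<otimes>\<^bsub>R\<^esub> fst p, 0)"

definition pair_rmult :: "('b, 'c) ring_scheme \<Rightarrow> 'b \<times> nat \<Rightarrow> 'b \<Rightarrow> 'b \<times> nat" where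
  "pair_rmult R p b = (fst p \<otimes>\<^bsub>R\<^esub> b, 0)"

lemma fs_map_id [simp]: "fs_map id h = h"
proof
  fix q
  have "{p. h p \<noteq> 0 \<and> id p = q} = (if h q \<noteq> 0 then {q} else {})" by auto
  then show "fs_map id h q = h q" by (simp add: fs_map_def)
qed

context ring
begin

lemma set_add_Int_subset_if_modular:
  assumes H: "ideal H R" and K: "ideal K R" and L: "ideal L R"
    and modular: "H \<inter> (K <+>\<^bsub>R\<^esub> L) \<subseteq> (H \<inter> K) <+>\<^bsub>R\<^esub> L"
  shows "(K <+>\<^bsub>R\<^esub> L) \<inter> (H <+>\<^bsub>R\<^esub> L) \<subseteq> (H \<inter> K) <+>\<^bsub>R\<^esub> L"
proof
  interpret H: ideal H R by fact
  interpret L: ideal L R by fact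
  interpret KL: ideal "K <+>\<^bsub>R\<^esub> L" R by (simp add: K L add_ideals)
  fix y assume y: "y \<in> (K <+>\<^bsub>R\<^esub> L) \<inter> (H <+>\<^bsub>R\<^esub> L)"
  then obtain w t where w: "w \<in> H" and t: "t \<in> L" and y_eq: "y = w \<oplus> t"
    by (auto simp: set_add_def')
  have "w = y \<ominus> t" using y_eq H.Icarr[OF w] L.Icarr[OF t] by algebra
  moreover have "t \<in> K <+>\<^bsub>R\<^esub> L" using t ideal_subset_set_add_right[OF K L] by blast
  ultimately have "w \<in> K <+>\<^bsub>R\<^esub> L" using y by (simp add: KL.a_closed a_minus_def)
  then have "w \<in> (H \<inter> K) <+>\<^bsub>R\<^esub> L" using modular w by blast
  then obtain a b where a: "a \<in> H \<inter> K" and b: "b \<in> L" and w_eq: "w = a \<oplus> b"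
    by (auto simp: set_add_def')
  have "y = a \<oplus> (b \<oplus> t)" using y_eq w_eq H.Icarr a L.Icarr[OF b] L.Icarr[OF t]
    by (simp add: a_assoc)
  moreover have "b \<oplus> t \<in> L" using b t by (rule L.a_closed)
  ultimately show "y \<in> (H \<inter> K) <+>\<^bsub>R\<^esub> L" using a by (auto simp: set_add_def')
qed

lemma comm_group_ideal_pairs:
  assumes "ideal L R"
  shows "comm_group \<lparr>carrier = L \<times> {0::nat}, monoid.mult = pair_add R, one = (\<zero>, 0)\<rparr>"
proof -
  interpret L: ideal L R by fact
  show ?thesis
  proof (rule comm_groupI)
    fix x assume "x \<in> carrier \<lparr>carrier = L \<times> {0::nat}, monoid.mult = pair_add R, one = (\<zero>, 0)\<rparr>"
    then obtain a where a: "a \<in> L" "x = (a, 0)" by auto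
    then have "(\<ominus> a, 0) \<in> L \<times> {0::nat}" "pair_add R (\<ominus> a, 0) x = (\<zero>, 0)"
      by (simp_all add: pair_add_def L.Icarr l_neg)
    then show "\<exists>y\<in>carrier \<lparr>carrier = L \<times> {0::nat}, monoid.mult = pair_add R, one = (\<zero>, 0)\<rparr>.
        y \<otimes>\<^bsub>\<lparr>carrier = L \<times> {0::nat}, monoid.mult = pair_add R, one = (\<zero>, 0)\<rparr>\<^esub> x
        = \<one>\<^bsub>\<lparr>carrier = L \<times> {0::nat}, monoid.mult = pair_add R, one = (\<zero>, 0)\<rparr>\<^esub>"
      by auto
  qed (auto simp: pair_add_def a_ac L.Icarr)
qed

lemma lmod_ideal_pairs: "ideal L R \<Longrightarrow> lmod R (L \<times> {0::nat}) (pair_add R) (\<zero>, 0) (pair_lmult R)"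
  using comm_group_ideal_pairs
  by (auto simp: lmod_def pair_add_def pair_lmult_def ideal.I_l_closed ideal.Icarr r_distr
      l_distr m_assoc)

lemma rmod_ideal_pairs: "ideal L R \<Longrightarrow> rmod R (L \<times> {0::nat}) (pair_add R) (\<zero>, 0) (pair_rmult R)"
  using comm_group_ideal_pairs
  by (auto simp: rmod_def pair_add_def pair_rmult_def ideal.I_r_closed ideal.Icarr r_distr
      l_distr m_assoc)

end

context ideal_family
begin

definition modular_family :: bool where
  "modular_family \<longleftrightarrow> (\<forall>m\<in>I. \<forall>n\<in>I. \<forall>K. ideal K B \<longrightarrow>
      J m \<inter> (K <+>\<^bsub>B\<^esub> J n) \<subseteq> (J m \<inter> K) <+>\<^bsub>B\<^esub> J n)"

definition Jint :: "'i set \<Rightarrow> 'b set" where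
  "Jint S = carrier B \<inter> (\<Inter>i\<in>S. J i)"

lemma Jint_insert: "i \<in> I \<Longrightarrow> Jint (insert i S) = J i \<inter> Jint S"
  using J_subset_carrier[of i] by (auto simp: Jint_def)

lemma ideal_Jint: "finite S \<Longrightarrow> S \<subseteq> I \<Longrightarrow> ideal (Jint S) B"
proof (induction S rule: finite_induct)
  case empty then show ?case by (simp add: Jint_def oneideal)
next
  case (insert i S) then show ?case by (simp add: Jint_insert ideal_J i_intersect)
qed

lemma Int_J2_subset:
  assumes modular_family and "finite S" "S \<subseteq> I" and n: "n \<in> I"
  shows "carrier B \<inter> (\<Inter>i\<in>S. J2 i n) \<subseteq> Jint S <+>\<^bsub>B\<^esub> J n"
  using assms(2,3)
proof (induction S rule: finite_induct)
  case empty
  show ?case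
    using ideal_subset_set_add_left[OF oneideal ideal_J[OF n]] by (simp add: Jint_def)
next
  case (insert m S)
  have m: "m \<in> I" and S: "S \<subseteq> I" using insert.prems by auto
  have "carrier B \<inter> (\<Inter>i\<in>insert m S. J2 i n) \<subseteq> (Jint S <+>\<^bsub>B\<^esub> J n) \<inter> (J m <+>\<^bsub>B\<^esub> J n)"
    using insert.IH[OF S] by auto
  also have "\<dots> \<subseteq> (J m \<inter> Jint S) <+>\<^bsub>B\<^esub> J n"
    using \<open>modular_family\<close> m n ideal_Jint[OF insert.hyps(1) S]
    by (intro set_add_Int_subset_if_modular ideal_J) (auto simp: modular_family_def)
  finally show ?case by (simp add: Jint_insert[OF m])
qed

lemma compatible_lift_insert:
  assumes modular_family and S: "finite S" "S \<subseteq> I" and n: "n \<in> I"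
    and x: "\<And>i. i \<in> I \<Longrightarrow> x i \<in> carrier B"
    and compatible: "\<And>i j. i \<in> I \<Longrightarrow> j \<in> I \<Longrightarrow> x i \<ominus> x j \<in> J2 i j"
    and b: "b \<in> carrier B" "\<And>i. i \<in> S \<Longrightarrow> b \<ominus> x i \<in> J i"
  shows "\<exists>b'\<in>carrier B. \<forall>i\<in>insert n S. b' \<ominus> x i \<in> J i"
proof -
  have "b \<ominus> x n \<in> J2 i n" if i: "i \<in> S" for i
  proof -
    have iI: "i \<in> I" using i S by auto
    have "b \<ominus> x n = (b \<ominus> x i) \<oplus> (x i \<ominus> x n)" using b x[OF iI] x[OF n] by algebra
    moreover have "b \<ominus> x i \<in> J2 i n" using b(2)[OF i] J_subset_J2_left[OF iI n] by auto
    ultimately show ?thesis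
      using compatible[OF iI n] ideal_J2[OF iI n]
        by (simp add: ideal.axioms(1) additive_subgroup.a_closed)
  qed
  then have "b \<ominus> x n \<in> Jint S <+>\<^bsub>B\<^esub> J n"
    using Int_J2_subset[OF assms(1-3) n] b x[OF n] by blast
  then obtain k t where k: "k \<in> Jint S" and t: "t \<in> J n" and kt: "b \<ominus> x n = k \<oplus> t"
    by (auto simp: set_add_def')
  have k_carr: "k \<in> carrier B" using k by (simp add: Jint_def)
  have t_carr: "t \<in> carrier B" using t J_subset_carrier[OF n] by blast
  have "(b \<ominus> k) \<ominus> x i \<in> J i" if "i \<in> insert n S" for i
  proof (cases "i = n")
    case True
    have "b = (b \<ominus> x n) \<oplus> x n" using b x[OF n] by algebra
    then have "b = k \<oplus> t \<oplus> x n" using kt by simp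
    then have "(b \<ominus> k) \<ominus> x n = t" using k_carr t_carr x[OF n] by algebra
    then show ?thesis using True t by simp
  next
    case False
    then have i: "i \<in> S" "i \<in> I" using that S by auto
    have "(b \<ominus> k) \<ominus> x i = (b \<ominus> x i) \<ominus> k" using b k_carr x[OF i(2)] by algebra
    moreover have "k \<in> J i" using k i by (simp add: Jint_def)
    ultimately show ?thesis using b(2)[OF i(1)] ideal_J[OF i(2)]
      by (simp add: a_minus_def additive_subgroup.a_closed additive_subgroup.a_inv_closed
          ideal.axioms(1))
  qed
  then show ?thesis using b k_carr by blast
qed

lemma compatible_lift:
  assumes modular_family and x: "\<And>i. i \<in> I \<Longrightarrow> x i \<in> carrier B"
    and compatible: "\<And>i j. i \<in> I \<Longrightarrow> j \<in> I \<Longrightarrow> x i \<ominus> x j \<in> J2 i j"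
  shows "\<exists>b\<in>carrier B. \<forall>i\<in>I. b \<ominus> x i \<in> J i"
proof -
  have "\<exists>b\<in>carrier B. \<forall>i\<in>S. b \<ominus> x i \<in> J i" if "finite S" "S \<subseteq> I" for S
    using that
  proof (induction S rule: finite_induct)
    case (insert n S)
    then have "n \<in> I" "S \<subseteq> I" by auto
    then obtain b where "b \<in> carrier B" "\<And>i. i \<in> S \<Longrightarrow> b \<ominus> x i \<in> J i"
      using insert.IH by blast
    then show ?case
      using compatible_lift_insert[OF assms(1) insert.hyps(1) \<open>S \<subseteq> I\<close> \<open>n \<in> I\<close> x compatible] by blast
  qed auto
  then show ?thesis using finite_I by blast
qed

lemma cov_Bc_vecA:
  assumes "a \<in> cov_Bc B J I"
  obtains x where "\<And>k. k \<in> I \<Longrightarrow> x k \<in> carrier B" "a = vecA x"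
    "\<And>i j. i \<in> I \<Longrightarrow> j \<in> I \<Longrightarrow> x i \<ominus> x j \<in> J2 i j"
proof -
  have a: "a \<in> carrier A" and compat: "\<forall>i\<in>I. \<forall>j\<in>I. cov_pit B J i j (a i) = cov_pit B J j i (a j)"
    using assms by (auto simp: cov_Bc_def)
  obtain x where x: "\<And>k. k \<in> I \<Longrightarrow> x k \<in> carrier B" and a_eq: "a = vecA x"
    using carrier_A_vecA[OF a] by blast
  have "x i \<ominus> x j \<in> J2 i j" if ij: "i \<in> I" "j \<in> I" for i j
  proof -
    have "cov_pit B J i j (a i) = cov_pit B J j i (a j)" using compat ij by simp
    moreover have "a i = J i +> x i" "a j = J j +> x j"
      using ij by (simp_all add: a_eq vecA_def cov_pi_def)
    ultimately have "J2 i j +> x i = J2 i j +> x j"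
      using ij x by (simp add: cov_pit_coset J2_comm)
    then show ?thesis using ij x by (simp add: quotient_eq_iff_same_a_r_cos ideal_J2)
  qed
  then show ?thesis using that x a_eq by blast
qed

lemma complete_covering_if_modular: "modular_family \<Longrightarrow> complete_covering B J I"
  unfolding complete_covering_def
proof
  fix a assume "modular_family" "a \<in> cov_Bc B J I"
  then obtain x b where x: "\<And>k. k \<in> I \<Longrightarrow> x k \<in> carrier B" and a: "a = vecA x"
    and b: "b \<in> carrier B" "\<forall>i\<in>I. b \<ominus> x i \<in> J i"
    by (metis cov_Bc_vecA compatible_lift)
  then have "cov_iota B J I b = a" by (simp add: cov_iota_eq vecA_eq_iff)
  with b show "\<exists>b\<in>carrier B. cov_iota B J I b = a" by blast
qed

lemma mult_J_in_modular_sum: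
  assumes m: "m \<in> I" and n: "n \<in> I" and K: "ideal K B" and d: "d \<in> J m"
    and s: "s \<in> K <+>\<^bsub>B\<^esub> J n"
  shows "d \<otimes> s \<in> (J m \<inter> K) <+>\<^bsub>B\<^esub> J n" "s \<otimes> d \<in> (J m \<inter> K) <+>\<^bsub>B\<^esub> J n"
proof -
  interpret Jm: ideal "J m" B by (rule ideal_J[OF m])
  interpret Jn: ideal "J n" B by (rule ideal_J[OF n])
  interpret K: ideal K B by fact
  obtain k t where k: "k \<in> K" and t: "t \<in> J n" and st: "s = k \<oplus> t"
    using s by (auto simp: set_add_def')
  have carr: "d \<in> carrier B" "k \<in> carrier B" "t \<in> carrier B"
    using d k t by (auto intro: Jm.Icarr K.Icarr Jn.Icarr)
  have "d \<otimes> s = d \<otimes> k \<oplus> d \<otimes> t" "d \<otimes> k \<in> J m \<inter> K" "d \<otimes> t \<in> J n"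
    using st carr d k t by (simp_all add: r_distr Jm.I_r_closed K.I_l_closed Jn.I_l_closed)
  then show "d \<otimes> s \<in> (J m \<inter> K) <+>\<^bsub>B\<^esub> J n" by (auto simp: set_add_def')
  have "s \<otimes> d = k \<otimes> d \<oplus> t \<otimes> d" "k \<otimes> d \<in> J m \<inter> K" "t \<otimes> d \<in> J n"
    using st carr d k t by (simp_all add: l_distr Jm.I_l_closed K.I_r_closed Jn.I_r_closed)
  then show "s \<otimes> d \<in> (J m \<inter> K) <+>\<^bsub>B\<^esub> J n" by (auto simp: set_add_def')
qed

abbreviation rmult_iota :: "('i \<Rightarrow> 'b set) \<Rightarrow> 'b \<Rightarrow> 'i \<Rightarrow> 'b set" where
  "rmult_iota a b \<equiv> a \<otimes>\<^bsub>A\<^esub> cov_iota B J I b"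

abbreviation lmult_iota :: "'b \<Rightarrow> ('i \<Rightarrow> 'b set) \<Rightarrow> 'i \<Rightarrow> 'b set" where
  "lmult_iota b a \<equiv> cov_iota B J I b \<otimes>\<^bsub>A\<^esub> a"

lemma coset_repA_mult:
  assumes m: "m \<in> I" and n: "n \<in> I" and K: "ideal K B"
    and x: "\<And>k. k \<in> I \<Longrightarrow> x k \<in> carrier B" and s: "s \<in> K <+>\<^bsub>B\<^esub> J n"
  shows "((J m \<inter> K) <+>\<^bsub>B\<^esub> J n) +> (repA m (vecA x) \<otimes> s) = ((J m \<inter> K) <+>\<^bsub>B\<^esub> J n) +> (x m \<otimes> s)"
    and "((J m \<inter> K) <+>\<^bsub>B\<^esub> J n) +> (s \<otimes> repA m (vecA x)) = ((J m \<inter> K) <+>\<^bsub>B\<^esub> J n) +> (s \<otimes> x m)"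
proof -
  have Q: "ideal ((J m \<inter> K) <+>\<^bsub>B\<^esub> J n) B" by (simp add: add_ideals i_intersect ideal_J m n K)
  have s_carr: "s \<in> carrier B"
    using s ideal.Icarr[OF add_ideals[OF K ideal_J[OF n]]] by blast
  have r: "repA m (vecA x) \<in> carrier B" "x m \<in> carrier B" using repA_spec(1)[OF vecA_closed] x m
    by auto
  have d: "repA m (vecA x) \<ominus> x m \<in> J m" by (rule repA_vecA[OF x m])
  have "repA m (vecA x) \<otimes> s \<ominus> x m \<otimes> s = (repA m (vecA x) \<ominus> x m) \<otimes> s"
    "s \<otimes> repA m (vecA x) \<ominus> s \<otimes> x m = s \<otimes> (repA m (vecA x) \<ominus> x m)"
    using r s_carr by algebra+
  then show "((J m \<inter> K) <+>\<^bsub>B\<^esub> J n) +> (repA m (vecA x) \<otimes> s) = ((J m \<inter> K) <+>\<^bsub>B\<^esub> J n) +> (x m \<otimes> s)"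
    and "((J m \<inter> K) <+>\<^bsub>B\<^esub> J n) +> (s \<otimes> repA m (vecA x)) = ((J m \<inter> K) <+>\<^bsub>B\<^esub> J n) +> (s \<otimes> x m)"
    using mult_J_in_modular_sum[OF m n K d s] r s_carr
    by (simp_all flip: quotient_eq_iff_same_a_r_cos[OF Q])
qed

lemma Rel_unitA_ideal_right:
  assumes ff: "ff_right B A (cov_iota B J I) TYPE('b \<times> nat)"
    and L: "ideal L B" and m: "m \<in> I" and w: "w \<in> J m" "w \<in> L"
  shows "fs_single (unitA m \<one>, (w, 0))
    \<in> tens_rel (carrier B) (carrier A) (add A) rmult_iota (L \<times> {0}) (pair_add B) (pair_lmult B)"
proof -
  interpret TB: tensor_relation "carrier B" "carrier A" "add A" rmult_iota
    "carrier B \<times> {0::nat}" "pair_add B" "pair_lmult B" .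
  have w_carr: "w \<in> carrier B" using w(1) J_subset_carrier[OF m] by blast
  have "TB.tens_eq (fs_single (rmult_iota (unitA m \<one>) w, (\<one>, 0)))
      (fs_single (unitA m \<one>, pair_lmult B w (\<one>, 0)))"
    using w_carr by (intro TB.tens_eq_bal unitA_closed) auto
  moreover have "rmult_iota (unitA m \<one>) w = \<zero>\<^bsub>A\<^esub>"
    using w_carr w(1) m by (simp add: cov_iota_eq unitA_mult_const unitA_eq_zero)
  moreover have "pair_lmult B w (\<one>, 0) = (w, 0)"
    using w_carr by (simp add: pair_lmult_def)
  ultimately have "TB.tens_eq (fs_single (unitA m \<one>, (w, 0))) (fs_single (\<zero>\<^bsub>A\<^esub>, (\<one>, 0::nat)))"
    using TB.tens_eq_sym by simp
  moreover have "fs_single (\<zero>\<^bsub>A\<^esub>, (\<one>, 0::nat)) \<in> TB.Rel"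
    by (intro TB.Rel_zero_left) auto
  ultimately have "fs_map id (fs_single (unitA m \<one>, (w, 0))) \<in> TB.Rel"
    by (simp add: TB.tens_eq_Rel)
  moreover have "fs_single (unitA m \<one>, (w, 0)) \<in> fsums (carrier A \<times> (L \<times> {0}))"
    using w by (auto intro!: fsums_single unitA_closed)
  moreover have "lmod_hom B (L \<times> {0}) (pair_add B) (pair_lmult B) (carrier B \<times> {0}) (pair_add B)
    (pair_lmult B) id"
    using ideal.Icarr[OF L] by (auto simp: lmod_hom_def)
  moreover note flat = ff[unfolded ff_right_def, THEN conjunct1, rule_format,
      of "carrier B \<times> {0}" "pair_add B" "(\<zero>, 0)" "pair_lmult B"
         "L \<times> {0}" "pair_add B" "(\<zero>, 0)" "pair_lmult B" id]
  moreover have "(\<lambda>(a, n). (a, id n)) = (id :: ('i \<Rightarrow> 'b set) \<times> ('b \<times> nat) \<Rightarrow> _)" by auto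
  ultimately show ?thesis
    using lmod_ideal_pairs[OF oneideal] lmod_ideal_pairs[OF L] by (intro flat) auto
qed

lemma mem_modular_sum_if_Rel_right:
  assumes m: "m \<in> I" and n: "n \<in> I" and K: "ideal K B" and w: "w \<in> K <+>\<^bsub>B\<^esub> J n"
    and Rel: "fs_single (unitA m \<one>, (w, 0)) \<in> tens_rel (carrier B) (carrier A) (add A) rmult_iota
      ((K <+>\<^bsub>B\<^esub> J n) \<times> {0}) (pair_add B) (pair_lmult B)"
  shows "w \<in> (J m \<inter> K) <+>\<^bsub>B\<^esub> J n"
proof -
  define L Q where "L = K <+>\<^bsub>B\<^esub> J n" and "Q = (J m \<inter> K) <+>\<^bsub>B\<^esub> J n"
  interpret L: ideal L B unfolding L_def by (simp add: add_ideals ideal_J n K)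
  interpret Q: ideal Q B unfolding Q_def by (simp add: add_ideals i_intersect ideal_J m n K)
  interpret BQ: abelian_group "B Quot Q" by (simp add: Q.quotient_is_ring ring.is_abelian_group)
  have w_L: "w \<in> L" and w_carr: "w \<in> carrier B" using w L.Icarr by (auto simp: L_def)
  define \<phi> where "\<phi> = (\<lambda>(a, p :: 'b \<times> nat). Q +> (repA m a \<otimes> fst p))"
  have \<phi>_vecA: "\<phi> (vecA x, p) = Q +> (x m \<otimes> fst p)"
    if "\<And>k. k \<in> I \<Longrightarrow> x k \<in> carrier B" "p \<in> L \<times> {0::nat}" for x p
    using coset_repA_mult(1)[OF m n K that(1)] that(2) by (auto simp: \<phi>_def L_def Q_def)
  have \<phi>_closed: "\<phi> \<in> carrier A \<times> L \<times> {0} \<rightarrow> carrier (B Quot Q)"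
    using m L.Icarr by (auto elim!: carrier_A_vecA simp: \<phi>_vecA FactRing_carrier)
  have "fs_lift (B Quot Q) \<phi> (fs_single (unitA m \<one>, (w, 0))) = \<zero>\<^bsub>B Quot Q\<^esub>"
  proof (rule BQ.fs_lift_tens_rel[OF Rel[folded L_def] _ _ _ _ \<phi>_closed])
    fix a a' p assume "a \<in> carrier A" "a' \<in> carrier A" "p \<in> L \<times> {0::nat}"
    then show "\<phi> (a \<oplus>\<^bsub>A\<^esub> a', p) = \<phi> (a, p) \<oplus>\<^bsub>B Quot Q\<^esub> \<phi> (a', p)"
      using m by (elim carrier_A_vecA)
        (auto simp: vecA_add \<phi>_vecA l_distr FactRing_add Q.is_ideal L.Icarr)
  next
    fix a p p' assume "a \<in> carrier A" "p \<in> L \<times> {0::nat}" "p' \<in> L \<times> {0::nat}"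
    then show "\<phi> (a, pair_add B p p') = \<phi> (a, p) \<oplus>\<^bsub>B Quot Q\<^esub> \<phi> (a, p')"
      using m by (elim carrier_A_vecA)
        (auto simp: pair_add_def \<phi>_vecA r_distr FactRing_add Q.is_ideal L.Icarr L.a_closed)
  next
    fix a r p assume "a \<in> carrier A" "r \<in> carrier B" "p \<in> L \<times> {0::nat}"
    then show "\<phi> (rmult_iota a r, p) = \<phi> (a, pair_lmult B r p)"
      using m by (elim carrier_A_vecA)
        (auto simp: pair_lmult_def cov_iota_eq vecA_mult \<phi>_vecA m_assoc L.Icarr L.I_l_closed)
  qed (auto simp: pair_add_def pair_lmult_def cov_iota_eq L.a_closed L.I_l_closed
      intro: mult_A_closed vecA_closed)
  moreover have "fs_lift (B Quot Q) \<phi> (fs_single (unitA m \<one>, (w, 0))) = Q +> w"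
    using w_L w_carr m
    by (subst BQ.fs_lift_single[OF _ \<phi>_closed]) (auto simp: unitA_def \<phi>_vecA intro!: vecA_closed)
  ultimately have "Q +> w = Q +> \<zero>" by (simp add: FactRing_zero Q.is_ideal)
  then have "w \<ominus> \<zero> \<in> Q" using w_carr by (simp add: quotient_eq_iff_same_a_r_cos[OF Q.is_ideal])
  then show ?thesis using w_carr by (simp add: Q_def a_minus_def)
qed

lemma Rel_unitA_ideal_left:
  assumes ff: "ff_left B A (cov_iota B J I) TYPE('b \<times> nat)"
    and L: "ideal L B" and m: "m \<in> I" and w: "w \<in> J m" "w \<in> L"
  shows "fs_single ((w, 0), unitA m \<one>)
    \<in> tens_rel (carrier B) (L \<times> {0}) (pair_add B) (pair_rmult B) (carrier A) (add A) lmult_iota"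
proof -
  interpret TB: tensor_relation "carrier B" "carrier B \<times> {0::nat}" "pair_add B" "pair_rmult B"
    "carrier A" "add A" lmult_iota .
  have w_carr: "w \<in> carrier B" using w(1) J_subset_carrier[OF m] by blast
  have "TB.tens_eq (fs_single (pair_rmult B (\<one>, 0) w, unitA m \<one>))
      (fs_single ((\<one>, 0), lmult_iota w (unitA m \<one>)))"
    using w_carr by (intro TB.tens_eq_bal unitA_closed) auto
  moreover have "lmult_iota w (unitA m \<one>) = \<zero>\<^bsub>A\<^esub>"
    using w_carr w(1) m by (simp add: cov_iota_eq const_mult_unitA unitA_eq_zero)
  moreover have "pair_rmult B (\<one>, 0) w = (w, 0)"
    using w_carr by (simp add: pair_rmult_def)
  ultimately have "TB.tens_eq (fs_single ((w, 0), unitA m \<one>)) (fs_single ((\<one>, 0::nat), \<zero>\<^bsub>A\<^esub>))"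
    using TB.tens_eq_sym by simp
  moreover have "fs_single ((\<one>, 0::nat), \<zero>\<^bsub>A\<^esub>) \<in> TB.Rel"
    by (intro TB.Rel_zero_right) auto
  ultimately have "fs_map id (fs_single ((w, 0), unitA m \<one>)) \<in> TB.Rel"
    by (simp add: TB.tens_eq_Rel)
  moreover have "fs_single ((w, 0), unitA m \<one>) \<in> fsums ((L \<times> {0}) \<times> carrier A)"
    using w by (auto intro!: fsums_single unitA_closed)
  moreover have "rmod_hom B (L \<times> {0}) (pair_add B) (pair_rmult B) (carrier B \<times> {0}) (pair_add B)
    (pair_rmult B) id"
    using ideal.Icarr[OF L] by (auto simp: rmod_hom_def)
  moreover note flat = ff[unfolded ff_left_def, THEN conjunct1, rule_format,
      of "carrier B \<times> {0}" "pair_add B" "(\<zero>, 0)" "pair_rmult B"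
         "L \<times> {0}" "pair_add B" "(\<zero>, 0)" "pair_rmult B" id]
  moreover have "(\<lambda>(n, a). (id n, a)) = (id :: ('b \<times> nat) \<times> ('i \<Rightarrow> 'b set) \<Rightarrow> _)" by auto
  ultimately show ?thesis
    using rmod_ideal_pairs[OF oneideal] rmod_ideal_pairs[OF L] by (intro flat) auto
qed

lemma mem_modular_sum_if_Rel_left:
  assumes m: "m \<in> I" and n: "n \<in> I" and K: "ideal K B" and w: "w \<in> K <+>\<^bsub>B\<^esub> J n"
    and Rel: "fs_single ((w, 0), unitA m \<one>) \<in> tens_rel (carrier B)
      ((K <+>\<^bsub>B\<^esub> J n) \<times> {0}) (pair_add B) (pair_rmult B) (carrier A) (add A) lmult_iota"
  shows "w \<in> (J m \<inter> K) <+>\<^bsub>B\<^esub> J n"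
proof -
  define L Q where "L = K <+>\<^bsub>B\<^esub> J n" and "Q = (J m \<inter> K) <+>\<^bsub>B\<^esub> J n"
  interpret L: ideal L B unfolding L_def by (simp add: add_ideals ideal_J n K)
  interpret Q: ideal Q B unfolding Q_def by (simp add: add_ideals i_intersect ideal_J m n K)
  interpret BQ: abelian_group "B Quot Q" by (simp add: Q.quotient_is_ring ring.is_abelian_group)
  have w_L: "w \<in> L" and w_carr: "w \<in> carrier B" using w L.Icarr by (auto simp: L_def)
  define \<phi> where "\<phi> = (\<lambda>(p :: 'b \<times> nat, a). Q +> (fst p \<otimes> repA m a))"
  have \<phi>_vecA: "\<phi> (p, vecA x) = Q +> (fst p \<otimes> x m)"
    if "\<And>k. k \<in> I \<Longrightarrow> x k \<in> carrier B" "p \<in> L \<times> {0}" for x p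
    using coset_repA_mult(2)[OF m n K that(1)] that(2) by (auto simp: \<phi>_def L_def Q_def)
  have \<phi>_closed: "\<phi> \<in> (L \<times> {0}) \<times> carrier A \<rightarrow> carrier (B Quot Q)"
    using m L.Icarr by (auto elim!: carrier_A_vecA simp: \<phi>_vecA FactRing_carrier)
  have "fs_lift (B Quot Q) \<phi> (fs_single ((w, 0), unitA m \<one>)) = \<zero>\<^bsub>B Quot Q\<^esub>"
  proof (rule BQ.fs_lift_tens_rel[OF Rel[folded L_def] _ _ _ _ \<phi>_closed])
    fix p p' a assume "p \<in> L \<times> {0::nat}" "p' \<in> L \<times> {0::nat}" "a \<in> carrier A"
    then show "\<phi> (pair_add B p p', a) = \<phi> (p, a) \<oplus>\<^bsub>B Quot Q\<^esub> \<phi> (p', a)"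
      using m by (elim carrier_A_vecA)
        (auto simp: pair_add_def \<phi>_vecA l_distr FactRing_add Q.is_ideal L.Icarr L.a_closed)
  next
    fix p a a' assume "p \<in> L \<times> {0::nat}" "a \<in> carrier A" "a' \<in> carrier A"
    then show "\<phi> (p, a \<oplus>\<^bsub>A\<^esub> a') = \<phi> (p, a) \<oplus>\<^bsub>B Quot Q\<^esub> \<phi> (p, a')"
      using m by (elim carrier_A_vecA)
        (auto simp: vecA_add \<phi>_vecA r_distr FactRing_add Q.is_ideal L.Icarr)
  next
    fix p r a assume "p \<in> L \<times> {0::nat}" "r \<in> carrier B" "a \<in> carrier A"
    then show "\<phi> (pair_rmult B p r, a) = \<phi> (p, lmult_iota r a)"
      using m by (elim carrier_A_vecA)
        (auto simp: pair_rmult_def cov_iota_eq vecA_mult \<phi>_vecA m_assoc L.Icarr L.I_r_closed)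
  qed (auto simp: pair_add_def pair_rmult_def cov_iota_eq L.a_closed L.I_r_closed
      intro: mult_A_closed vecA_closed)
  moreover have "fs_lift (B Quot Q) \<phi> (fs_single ((w, 0), unitA m \<one>)) = Q +> w"
    using w_L w_carr m
    by (subst BQ.fs_lift_single[OF _ \<phi>_closed]) (auto simp: unitA_def \<phi>_vecA intro!: vecA_closed)
  ultimately have "Q +> w = Q +> \<zero>" by (simp add: FactRing_zero Q.is_ideal)
  then have "w \<ominus> \<zero> \<in> Q" using w_carr by (simp add: quotient_eq_iff_same_a_r_cos[OF Q.is_ideal])
  then show ?thesis using w_carr by (simp add: Q_def a_minus_def)
qed

lemma modular_family_if_faithfully_flat:
  assumes "ff_left B A (cov_iota B J I) TYPE('b \<times> nat)
    \<or> ff_right B A (cov_iota B J I) TYPE('b \<times> nat)"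
  shows modular_family
  unfolding modular_family_def
proof (intro ballI allI impI subsetI)
  fix m n K w assume m: "m \<in> I" and n: "n \<in> I" and K: "ideal K B" and w: "w \<in> J m \<inter> (K <+>\<^bsub>B\<^esub> J n)"
  have L: "ideal (K <+>\<^bsub>B\<^esub> J n) B" by (simp add: add_ideals K ideal_J n)
  from assms show "w \<in> (J m \<inter> K) <+>\<^bsub>B\<^esub> J n"
  proof
    assume "ff_left B A (cov_iota B J I) TYPE('b \<times> nat)"
    then show ?thesis
      using w by (intro mem_modular_sum_if_Rel_left[OF m n K] Rel_unitA_ideal_left[OF _ L m]) auto
  next
    assume "ff_right B A (cov_iota B J I) TYPE('b \<times> nat)"
    then show ?thesis
      using w by (intro mem_modular_sum_if_Rel_right[OF m n K] Rel_unitA_ideal_right[OF _ L m]) auto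
  qed
qed

end

theorem theorem3p4:
  fixes K :: "('k,'e) ring_scheme" and B :: "('b,'c) ring_scheme" and phi :: "'k \<Rightarrow> 'b"
    and J :: "'i \<Rightarrow> 'b set" and I :: "'i set"
  assumes "k_algebra K B phi"
    and "covering B J I"
  shows "(complete_covering B J I \<longrightarrow>
            galois_coring (cov_A B J I) (cov_C B J I) (cov_lact B J I) (cov_ract B J I)
              (cov_Delta B J I) (cov_eps B J I) (cov_g B J I))
       \<and> ((ff_left B (cov_A B J I) (cov_iota B J I) TYPE('b \<times> nat)
           \<or> ff_right B (cov_A B J I) (cov_iota B J I) TYPE('b \<times> nat))
          \<longrightarrow> complete_covering B J I)"
proof -
  have "ring B" using assms(1) by (simp add: k_algebra_def)
  moreover have "finite I" "\<And>i. i \<in> I \<Longrightarrow> ideal (J i) B"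
    using assms(2) by (auto simp: covering_def)
  ultimately interpret ideal_family B J I
    by (simp add: ideal_family_def ideal_family_axioms_def)
  show ?thesis
    using galois_coring_cov complete_covering_if_modular modular_family_if_faithfully_flat by blast
qed

end
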